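(* Let $\varphi(z_1,\dots,z_h)$ be a homogeneous cubic polynomial with real coefficients, and for $z\in\mathbb{C}^h$ let $\omega(z)=-\varphi(z)e_0+\sum_{i=1}^h\frac{\partial\varphi}{\partial z_i}e_i+\sum_{i=1}^hz_if_i+f_0$ in $\mathbb{C}^{2h+2}$ with real symplectic basis $e_0,\dots,e_h,f_1,\dots,f_h,f_0$. Define the filtration $F^3=\mathbb{C}\omega(z)$, $F^2=\operatorname{span}\{\omega,\partial\omega/\partial z_1,\dots,\partial\omega/\partial z_h\}$, $F^1=(F^3)^\perp$, $F^0=\mathbb{C}^{2h+2}$. Write $y=(\operatorname{Im}z_1,\dots,\operatorname{Im}z_h)\in\mathbb{R}^h$. Then the set of $z\in\mathbb{C}^h$ at which the Hodge–Riemann bilinear relations hold, namely $\sqrt{-1}\langle\omega,\bar\omega\rangle>0$ and the Hermitian form $\psi\mapsto\sqrt{-1}\langle\psi,\bar\psi\rangle$ is negative definite on $V^{2,1}=\{\psi\in F^2:\langle\psi,\bar\omega\rangle=0\}$, equals the set of $z$ such that $\varphi(y)<0$ and the real symmetric matrix $\bigl(\frac{\partial^2\varphi}{\partial z_i\partial z_j}(y)\bigr)$ has signature $(h-1,1)$ (i.e. $h-1$ positive and one negative eigenvalue).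
   Context: Symplectic basis: $\langle e_i,e_j\rangle=\langle f_i,f_j\rangle=0$, $\langle e_i,f_j\rangle=\delta_{ij}$; complex conjugation is with respect to the real structure in which all $e_i,f_i$ are real. *)

theory Defs
  imports "HOL-Analysis.Analysis" "HOL-Library.Complex_Order"
    "Jordan_Normal_Form.Matrix" "Jordan_Normal_Form.Char_Poly"
begin

(* Homogeneous cubic polynomial in z_1..z_h with real coefficients c i j k
   (every real homogeneous cubic is of this form), evaluated over any
   real normed field (here: real or complex). *)
definition cubic_form :: "nat \<Rightarrow> (nat \<Rightarrow> nat \<Rightarrow> nat \<Rightarrow> real) \<Rightarrow> (nat \<Rightarrow> 'a::real_normed_field) \<Rightarrow> 'a" where
  "cubic_form h c z = (\<Sum>i=1..h. \<Sum>j=1..h. \<Sum>k=1..h. of_real (c i j k) * z i * z j * z k)"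

definition pd :: "nat \<Rightarrow> ((nat \<Rightarrow> 'a::real_normed_field) \<Rightarrow> 'a) \<Rightarrow> (nat \<Rightarrow> 'a) \<Rightarrow> 'a" where
  "pd i F z = deriv (\<lambda>t. F (z(i := z i + t))) 0"

(* C^{2h+2}: coordinate k (0 \<le> k \<le> h) is the e_k coordinate,
   coordinate h+1+k (0 \<le> k \<le> h) is the f_k coordinate. *)
definition sympl :: "nat \<Rightarrow> complex vec \<Rightarrow> complex vec \<Rightarrow> complex" where
  "sympl h v w = (\<Sum>k=0..h. v $ k * w $ (h+1+k) - v $ (h+1+k) * w $ k)"

definition cconj :: "complex vec \<Rightarrow> complex vec" where
  "cconj v = map_vec cnj v"

definition omega :: "nat \<Rightarrow> (nat \<Rightarrow> nat \<Rightarrow> nat \<Rightarrow> real) \<Rightarrow> (nat \<Rightarrow> complex) \<Rightarrow> complex vec" where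
  "omega h c z = vec (2*h+2) (\<lambda>k.
      if k = 0 then - cubic_form h c z
      else if k \<le> h then pd k (cubic_form h c) z
      else if k = h+1 then 1
      else z (k - (h+1)))"

definition domega :: "nat \<Rightarrow> (nat \<Rightarrow> nat \<Rightarrow> nat \<Rightarrow> real) \<Rightarrow> nat \<Rightarrow> (nat \<Rightarrow> complex) \<Rightarrow> complex vec" where
  "domega h c i z = vec (2*h+2) (\<lambda>k. pd i (\<lambda>w. omega h c w $ k) z)"

definition F2 :: "nat \<Rightarrow> (nat \<Rightarrow> nat \<Rightarrow> nat \<Rightarrow> real) \<Rightarrow> (nat \<Rightarrow> complex) \<Rightarrow> complex vec set" where
  "F2 h c z = {vec (2*h+2) (\<lambda>k. a 0 * omega h c z $ k + (\<Sum>i=1..h. a i * domega h c i z $ k)) | a. True}"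

definition V21 :: "nat \<Rightarrow> (nat \<Rightarrow> nat \<Rightarrow> nat \<Rightarrow> real) \<Rightarrow> (nat \<Rightarrow> complex) \<Rightarrow> complex vec set" where
  "V21 h c z = {\<psi> \<in> F2 h c z. sympl h \<psi> (cconj (omega h c z)) = 0}"

definition HR_holds :: "nat \<Rightarrow> (nat \<Rightarrow> nat \<Rightarrow> nat \<Rightarrow> real) \<Rightarrow> (nat \<Rightarrow> complex) \<Rightarrow> bool" where
  "HR_holds h c z \<longleftrightarrow>
     0 < \<i> * sympl h (omega h c z) (cconj (omega h c z)) \<and>
     (\<forall>\<psi>\<in>V21 h c z. \<psi> \<noteq> 0\<^sub>v (2*h+2) \<longrightarrow> \<i> * sympl h \<psi> (cconj \<psi>) < 0)"

(* Hessian matrix (d^2 phi / dz_i dz_j (y))_{i,j=1..h}, 0-based matrix indices *)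
definition hessian :: "nat \<Rightarrow> (nat \<Rightarrow> nat \<Rightarrow> nat \<Rightarrow> real) \<Rightarrow> (nat \<Rightarrow> real) \<Rightarrow> real mat" where
  "hessian h c y = mat h h (\<lambda>(i,j). pd (i+1) (pd (j+1) (cubic_form h c)) y)"

definition num_pos_eig :: "real mat \<Rightarrow> nat" where
  "num_pos_eig A = (\<Sum>t\<in>{t. poly (char_poly A) t = 0 \<and> t > 0}. order t (char_poly A))"

definition num_neg_eig :: "real mat \<Rightarrow> nat" where
  "num_neg_eig A = (\<Sum>t\<in>{t. poly (char_poly A) t = 0 \<and> t < 0}. order t (char_poly A))"

definition has_signature :: "real mat \<Rightarrow> nat \<Rightarrow> nat \<Rightarrow> bool" where
  "has_signature A p q \<longleftrightarrow> num_pos_eig A = p \<and> num_neg_eig A = q"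

end

theory Submission
  imports Defs
begin

(* Write y = Im z and let T be the symmetric trilinear form with T(z,z,z) = 6 phi(z).  The proof
   computes the Gram matrix of the symplectic pairing <-, conj ->  on  omega, d omega/dz_1, ...,
   d omega/dz_h:  it equals  (4/3) i T(y,y,y),  +-2 T(e_j,y,y)  and  2 i T(e_j,e_l,y), so it only
   depends on y.  Hence the first relation says phi(y) < 0.  On V^{2,1} the orthogonality to
   conj omega eliminates the omega-coefficient, and the Hermitian form becomes -2 (R(Re a) + R(Im a))
   for the real quadratic form  R(x) = x^T H x - (3/2) (x^T H y)^2 / (y^T H y),  H the Hessian of phi
   at y.  Finally, for a symmetric H with y^T H y < 0 and any kappa > 1, the form
   x^T H x - kappa (x^T H y)^2 / y^T H y  is positive definite iff H has signature (h-1, 1). *)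

unbundle no vec_syntax

section \<open>Orthogonal diagonalisation of real symmetric matrices\<close>

lemma reflection_involution:
  fixes w :: "real vec"
  assumes w: "w \<in> carrier_vec n" and ww: "w \<bullet> w \<noteq> 0"
  defines "W \<equiv> mat n n (\<lambda>(i,j). (if i = j then 1 else 0) - 2 / (w \<bullet> w) * w $ i * w $ j)"
  shows "W * W = 1\<^sub>m n" and "transpose_mat W = W"
proof -
  define c where "c = 2 / (w \<bullet> w)"
  have ww_sum: "w \<bullet> w = (\<Sum>k<n. w $ k * w $ k)" using w by (simp add: scalar_prod_def atLeast0LessThan)
  have entry: "(\<Sum>k<n. ((if i = k then 1 else 0) - c * w $ i * w $ k) * ((if k = j then 1 else 0) - c * w $ k * w $ j))
    = (if i = j then 1 else 0)" if ij: "i < n" "j < n" for i j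
  proof -
    have "((if i = k then 1 else 0) - c * w $ i * w $ k) * ((if k = j then 1 else 0) - c * w $ k * w $ j)
       = (if i = k then (if k = j then 1 else 0) else 0) - (if i = k then c * w $ k * w $ j else 0)
         - (if k = j then c * w $ i * w $ k else 0) + c^2 * w $ i * w $ j * (w $ k * w $ k)" for k
      by (auto simp: algebra_simps power2_eq_square)
    hence "(\<Sum>k<n. ((if i = k then 1 else 0) - c * w $ i * w $ k) * ((if k = j then 1 else 0) - c * w $ k * w $ j))
      = (if i = j then 1 else 0) - 2 * c * w $ i * w $ j + c^2 * w $ i * w $ j * (w \<bullet> w)"
      unfolding ww_sum using ij
      by (simp add: sum.distrib sum_subtractf sum_distrib_left[symmetric] sum.delta sum.delta')
    also have "\<dots> = (if i = j then 1 else 0)" using ww unfolding c_def by (simp add: power2_eq_square field_simps)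
    finally show ?thesis .
  qed
  show "W * W = 1\<^sub>m n"
  proof (rule eq_matI)
    fix i j assume ij: "i < dim_row (1\<^sub>m n)" "j < dim_col (1\<^sub>m n)"
    hence "(W * W) $$ (i,j) = (\<Sum>k<n. ((if i = k then 1 else 0) - c * w $ i * w $ k) *
          ((if k = j then 1 else 0) - c * w $ k * w $ j))"
      unfolding W_def c_def by (auto simp: scalar_prod_def atLeast0LessThan intro!: sum.cong)
    thus "(W * W) $$ (i,j) = 1\<^sub>m n $$ (i,j)" using ij entry by auto
  qed (simp_all add: W_def)
  show "transpose_mat W = W" unfolding W_def by (rule eq_matI) auto
qed

lemma householder_reflection:
  fixes u :: "real vec"
  assumes u: "u \<in> carrier_vec n" and uu: "u \<bullet> u = 1" and n: "n > 0"
  shows "\<exists>W. W \<in> carrier_mat n n \<and> transpose_mat W = W \<and> W * W = 1\<^sub>m n \<and> W *\<^sub>v unit_vec n 0 = u"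
proof (cases "u = unit_vec n 0")
  case True
  thus ?thesis using u by (intro exI[of _ "1\<^sub>m n"]) auto
next
  case False
  define w where "w = u - unit_vec n 0"
  have w: "w \<in> carrier_vec n" using u by (simp add: w_def)
  have wi: "\<And>i. i < n \<Longrightarrow> w $ i = u $ i - (if i = 0 then 1 else 0)"
    using u by (simp add: w_def unit_vec_def)
  have ww: "w \<bullet> w = 2 - 2 * u $ 0"
    unfolding w_def using u uu n by (simp add: minus_scalar_prod_distrib scalar_prod_minus_distrib)
  have "w \<bullet> w \<noteq> 0"
  proof
    assume "w \<bullet> w = 0"
    hence "(\<Sum>k<n. w $ k * w $ k) = 0" using w by (simp add: scalar_prod_def atLeast0LessThan)
    hence "\<And>k. k < n \<Longrightarrow> w $ k = 0" by (subst (asm) sum_nonneg_eq_0_iff) auto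
    hence "u = unit_vec n 0" using u wi by (intro eq_vecI) (force simp: unit_vec_def)+
    thus False using False by simp
  qed
  define W where "W = mat n n (\<lambda>(i,j). (if i = j then 1 else 0) - 2 / (w \<bullet> w) * w $ i * w $ j)"
  have cw0: "2 / (w \<bullet> w) * w $ 0 = -1" using wi[OF n] \<open>w \<bullet> w \<noteq> 0\<close> ww by (simp add: field_simps)
  have "W *\<^sub>v unit_vec n 0 = u"
  proof (rule eq_vecI)
    fix i assume i: "i < dim_vec u"
    have "(W *\<^sub>v unit_vec n 0) $ i = W $$ (i,0)"
      using n u i by (simp add: W_def scalar_prod_def unit_vec_def row_def if_distrib cong: if_cong)
    also have "\<dots> = (if i = 0 then 1 else 0) - w $ i * (2 / (w \<bullet> w) * w $ 0)" unfolding W_def using i u n by auto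
    also have "\<dots> = u $ i" using wi[of i] i u cw0 by auto
    finally show "(W *\<^sub>v unit_vec n 0) $ i = u $ i" .
  qed (use u in \<open>simp add: W_def\<close>)
  thus ?thesis using reflection_involution[OF w \<open>w \<bullet> w \<noteq> 0\<close>] unfolding W_def[symmetric]
    by (intro exI[of _ W]) (simp add: W_def)
qed

lemma real_symmetric_eigenvalue_real:
  fixes A :: "real mat"
  assumes A: "A \<in> carrier_mat n n" and sym: "transpose_mat A = A"
    and w: "w \<in> carrier_vec n" "w \<noteq> 0\<^sub>v n" "map_mat complex_of_real A *\<^sub>v w = a \<cdot>\<^sub>v w"
  shows "a \<in> \<real>"
proof -
  define s where "s = (\<Sum>i<n. cnj (w $ i) * (\<Sum>j<n. of_real (A $$ (i,j)) * w $ j))"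
  define q where "q = (\<Sum>i<n. cnj (w $ i) * w $ i)"
  have "s = (\<Sum>i<n. cnj (w $ i) * (map_mat complex_of_real A *\<^sub>v w) $ i)"
    unfolding s_def using w(1) A
    by (intro sum.cong refl, auto simp: scalar_prod_def atLeast0LessThan)
  also have "\<dots> = a * q" unfolding w(3) q_def using w(1)
    by (simp add: sum_distrib_left mult.commute mult.left_commute)
  finally have sq: "s = a * q" .
  have Asym: "\<And>i j. i < n \<Longrightarrow> j < n \<Longrightarrow> A $$ (j,i) = A $$ (i,j)"
    using sym A by (metis carrier_matD index_transpose_mat(1))
  have "cnj s = (\<Sum>j<n. \<Sum>i<n. w $ i * of_real (A $$ (i,j)) * cnj (w $ j))"
    unfolding s_def by (subst sum.swap) (simp add: sum_distrib_left mult.assoc)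
  also have "\<dots> = s" unfolding s_def sum_distrib_left
    by (intro sum.cong refl, simp add: Asym mult.commute mult.left_commute)
  finally have cs: "cnj s = s" .
  obtain i where i: "i < n" "w $ i \<noteq> 0"
    using w by (metis carrier_vecD eq_vecI index_zero_vec)
  have "(\<Sum>i<n. (cmod (w $ i))^2) > 0"
    by (rule sum_pos2[of _ i], use i in auto)
  moreover have "q = of_real (\<Sum>i<n. (cmod (w $ i))^2)"
    unfolding q_def by (simp add: complex_norm_square mult.commute del: of_real_power)
  ultimately have "q \<noteq> 0" "cnj q = q" by (auto simp del: of_real_power of_real_sum)
  hence "cnj a = a" using cs sq by (metis complex_cnj_mult mult_cancel_right)
  thus ?thesis by (metis Reals_cnj_iff)
qed

(* Every real symmetric matrix of positive size has a real eigenvector: a complex root of its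
   characteristic polynomial is real by the previous lemma. *)
lemma real_symmetric_eigenvector:
  fixes A :: "real mat"
  assumes A: "A \<in> carrier_mat n n" and sym: "transpose_mat A = A" and n: "n > 0"
  shows "\<exists>l v. v \<in> carrier_vec n \<and> v \<noteq> 0\<^sub>v n \<and> A *\<^sub>v v = l \<cdot>\<^sub>v v"
proof -
  define Ac where "Ac = map_mat complex_of_real A"
  have Ac: "Ac \<in> carrier_mat n n" using A by (simp add: Ac_def)
  from char_poly_factorized[OF Ac] obtain as where
    cp: "char_poly Ac = (\<Prod>a\<leftarrow>as. [:- a, 1:])" and len: "length as = n" by auto
  from len n obtain a where a: "a \<in> set as" by (cases as) auto
  have root: "poly (char_poly Ac) a = 0" unfolding cp using a
    by (simp add: poly_prod_list prod_list_zero_iff)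
  hence "eigenvalue Ac a" using eigenvalue_root_char_poly[OF Ac] by simp
  then obtain w where "w \<in> carrier_vec n" "w \<noteq> 0\<^sub>v n" "Ac *\<^sub>v w = a \<cdot>\<^sub>v w"
    unfolding eigenvalue_def eigenvector_def using Ac by auto
  hence "a \<in> \<real>" using real_symmetric_eigenvalue_real[OF A sym] unfolding Ac_def by blast
  hence aR: "a = of_real (Re a)" by (simp add: complex_is_Real_iff complex_eq_iff)
  have "char_poly Ac = map_poly of_real (char_poly A)"
    unfolding Ac_def by (rule of_real_hom.char_poly_hom[OF A])
  hence "poly (char_poly A) (Re a) = 0"
    using root aR by (metis of_real_eq_0_iff of_real_hom.poly_map_poly)
  hence "eigenvalue A (Re a)" using eigenvalue_root_char_poly[OF A] by simp
  thus ?thesis unfolding eigenvalue_def eigenvector_def using A by auto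
qed

lemma real_symmetric_unit_eigenvector:
  fixes A :: "real mat"
  assumes A: "A \<in> carrier_mat n n" and sym: "transpose_mat A = A" and n: "n > 0"
  shows "\<exists>l u. u \<in> carrier_vec n \<and> u \<bullet> u = 1 \<and> A *\<^sub>v u = l \<cdot>\<^sub>v u"
proof -
  from real_symmetric_eigenvector[OF A sym n] obtain l v where
    v: "v \<in> carrier_vec n" "v \<noteq> 0\<^sub>v n" "A *\<^sub>v v = l \<cdot>\<^sub>v v" by auto
  obtain i where i: "i < n" "v $ i \<noteq> 0"
    using v by (metis carrier_vecD eq_vecI index_zero_vec)
  have "(\<Sum>k\<in>{0..<n}. v $ k * v $ k) > 0"
    by (rule sum_pos2[of _ i], use i in \<open>auto simp: zero_less_mult_iff linorder_neq_iff\<close>)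
  hence vv: "v \<bullet> v > 0" using v by (simp add: scalar_prod_def)
  define u where "u = (1 / sqrt (v \<bullet> v)) \<cdot>\<^sub>v v"
  have "u \<in> carrier_vec n" using v by (simp add: u_def)
  moreover have "u \<bullet> u = 1" unfolding u_def using v vv
    by (simp add: smult_scalar_prod_distrib scalar_prod_smult_distrib)
  moreover have "A *\<^sub>v u = l \<cdot>\<^sub>v u" unfolding u_def using v A
    by (simp add: mult_mat_vec smult_smult_assoc mult.commute)
  ultimately show ?thesis by blast
qed

(* Deflation: a unit eigenvector of a symmetric matrix A is moved to the first coordinate axis by a
   Householder reflection W, which splits off the eigenvalue as a 1 x 1 block of W A W. *)
lemma symmetric_deflation:
  fixes A :: "real mat"
  assumes A: "A \<in> carrier_mat (Suc m) (Suc m)" and sym: "transpose_mat A = A"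
  shows "\<exists>W l B. W \<in> carrier_mat (Suc m) (Suc m) \<and> transpose_mat W = W \<and> W * W = 1\<^sub>m (Suc m) \<and>
     B \<in> carrier_mat m m \<and> transpose_mat B = B \<and>
     W * A * W = four_block_mat (mat 1 1 (\<lambda>_. l)) (0\<^sub>m 1 m) (0\<^sub>m m 1) B"
proof -
  let ?n = "Suc m" and ?e = "unit_vec (Suc m) 0"
  from real_symmetric_unit_eigenvector[OF A sym] obtain l and u :: "real vec" where
    u: "u \<in> carrier_vec ?n" and uu: "u \<bullet> u = 1" and Au: "A *\<^sub>v u = l \<cdot>\<^sub>v u" by auto
  from householder_reflection[OF u uu] obtain W where
    W: "W \<in> carrier_mat ?n ?n" "transpose_mat W = W" "W * W = 1\<^sub>m ?n" "W *\<^sub>v ?e = u"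
    by auto
  define A' where "A' = W * A * W"
  have A': "A' \<in> carrier_mat ?n ?n" using W A by (simp add: A'_def)
  have symA': "transpose_mat A' = A'" unfolding A'_def using W A sym
    by (simp add: transpose_mult[of _ ?n ?n _ ?n] assoc_mult_mat[of _ ?n ?n _ ?n _ ?n])
  have "A' *\<^sub>v ?e = W *\<^sub>v (A *\<^sub>v u)"
    unfolding A'_def W(4)[symmetric] using W A by (simp add: assoc_mult_mat_vec[of _ ?n ?n _ ?n])
  also have "\<dots> = l \<cdot>\<^sub>v ?e"
  proof -
    have "W *\<^sub>v u = W *\<^sub>v (W *\<^sub>v ?e)" using W(4) by simp
    also have "\<dots> = (W * W) *\<^sub>v ?e"
      by (rule assoc_mult_mat_vec[symmetric, of _ ?n ?n _ ?n]) (use W in auto)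
    finally have "W *\<^sub>v u = ?e" using W(3) by simp
    thus ?thesis unfolding Au using W u by (simp add: mult_mat_vec)
  qed
  finally have A'e: "A' *\<^sub>v ?e = l \<cdot>\<^sub>v ?e" .
  have col0: "A' $$ (j,0) = (if j = 0 then l else 0)" if j: "j < ?n" for j
  proof -
    have "(A' *\<^sub>v ?e) $ j = A' $$ (j,0)" using A' j
      by (simp add: scalar_prod_def row_def unit_vec_def if_distrib cong: if_cong)
    thus ?thesis unfolding A'e using j by (cases "j = 0") auto
  qed
  have row0: "A' $$ (0,j) = (if j = 0 then l else 0)" if "j < ?n" for j
    using col0 symA' A' that by (metis carrier_matD index_transpose_mat(1) zero_less_Suc)
  define B where "B = mat m m (\<lambda>(i,j). A' $$ (Suc i, Suc j))"
  have symB: "transpose_mat B = B" unfolding B_def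
    using symA' A' by (intro eq_matI) (auto, metis carrier_matD index_transpose_mat(1) Suc_less_eq)
  have "B \<in> carrier_mat m m" by (simp add: B_def)
  moreover have "A' = four_block_mat (mat 1 1 (\<lambda>_. l)) (0\<^sub>m 1 m) (0\<^sub>m m 1) B"
    by (rule eq_matI, insert A' col0 row0, auto simp: B_def)
  ultimately show ?thesis using W symB unfolding A'_def by blast
qed

definition diag_matrix :: "nat \<Rightarrow> (nat \<Rightarrow> 'a::zero) \<Rightarrow> 'a mat" where
  "diag_matrix n d = mat n n (\<lambda>(i,j). if i = j then d i else 0)"

lemma diag_matrix_carrier [simp]: "diag_matrix n d \<in> carrier_mat n n"
  by (simp add: diag_matrix_def)

lemma block_diag_mult:
  fixes a b :: "'a::comm_ring_1"
  assumes B: "B \<in> carrier_mat m m" and C: "C \<in> carrier_mat m m"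
  shows "four_block_mat (mat 1 1 (\<lambda>_. a)) (0\<^sub>m 1 m) (0\<^sub>m m 1) B *
     four_block_mat (mat 1 1 (\<lambda>_. b)) (0\<^sub>m 1 m) (0\<^sub>m m 1) C
   = four_block_mat (mat 1 1 (\<lambda>_. a * b)) (0\<^sub>m 1 m) (0\<^sub>m m 1) (B * C)"
proof -
  have c: "mat 1 1 (\<lambda>_. a) \<in> carrier_mat 1 1" "mat 1 1 (\<lambda>_. b) \<in> carrier_mat 1 1"
    "0\<^sub>m 1 m \<in> carrier_mat 1 m" "0\<^sub>m m 1 \<in> carrier_mat m 1"
    by auto
  have "mat 1 1 (\<lambda>_. a) * mat 1 1 (\<lambda>_. b) = mat 1 1 (\<lambda>_. a * b)"
    by (rule eq_matI) (auto simp: scalar_prod_def)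
  thus ?thesis
    unfolding mult_four_block_mat[OF c(1,3,4) B c(2,3,4) C] using B C by simp
qed

definition orthogonal_matrix :: "nat \<Rightarrow> 'a::comm_ring_1 mat \<Rightarrow> bool" where
  "orthogonal_matrix n U \<longleftrightarrow>
     U \<in> carrier_mat n n \<and> transpose_mat U * U = 1\<^sub>m n \<and> U * transpose_mat U = 1\<^sub>m n"

lemma orthogonal_matrix_mult:
  fixes U V :: "'a::comm_ring_1 mat"
  assumes U: "orthogonal_matrix n U" and V: "orthogonal_matrix n V"
  shows "orthogonal_matrix n (U * V)"
    and "A \<in> carrier_mat n n \<Longrightarrow>
      transpose_mat (U * V) * A * (U * V) = transpose_mat V * (transpose_mat U * A * U) * V"
proof -
  have c: "U \<in> carrier_mat n n" "V \<in> carrier_mat n n" "transpose_mat U \<in> carrier_mat n n"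
    "transpose_mat V \<in> carrier_mat n n" using U V by (auto simp: orthogonal_matrix_def)
  have T: "transpose_mat (U * V) = transpose_mat V * transpose_mat U"
    using c by (simp add: transpose_mult[of _ n n _ n])
  have "transpose_mat (U * V) * (U * V) = transpose_mat V * (transpose_mat U * U) * V"
    unfolding T using c by (simp add: assoc_mult_mat[of _ n n _ n _ n])
  moreover have "U * V * transpose_mat (U * V) = U * (V * transpose_mat V) * transpose_mat U"
    unfolding T using c by (simp add: assoc_mult_mat[of _ n n _ n _ n])
  ultimately show "orthogonal_matrix n (U * V)" using U V c by (simp add: orthogonal_matrix_def)
  show "transpose_mat (U * V) * A * (U * V) = transpose_mat V * (transpose_mat U * A * U) * V"
    if "A \<in> carrier_mat n n" unfolding T using c that by (simp add: assoc_mult_mat[of _ n n _ n _ n])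
qed

lemma orthogonal_block_extension:
  fixes V M :: "'a::comm_ring_1 mat" and m :: nat
  defines "blk \<equiv> \<lambda>a X. four_block_mat (mat 1 1 (\<lambda>_. a)) (0\<^sub>m 1 m) (0\<^sub>m m 1) X"
  assumes V: "orthogonal_matrix m V"
  shows "orthogonal_matrix (Suc m) (blk 1 V)"
    and "M \<in> carrier_mat m m \<Longrightarrow>
      transpose_mat (blk 1 V) * blk l M * blk 1 V = blk l (transpose_mat V * M * V)"
proof -
  have Vc: "V \<in> carrier_mat m m" "transpose_mat V \<in> carrier_mat m m"
    using V by (auto simp: orthogonal_matrix_def)
  have T: "transpose_mat (blk 1 V) = blk 1 (transpose_mat V)"
    unfolding blk_def using Vc by (subst transpose_four_block_mat) (auto intro!: eq_matI)
  have "blk 1 (transpose_mat V) * blk 1 V = 1\<^sub>m (Suc m)" "blk 1 V * blk 1 (transpose_mat V) = 1\<^sub>m (Suc m)"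
    unfolding blk_def using V unfolding orthogonal_matrix_def
    by (subst block_diag_mult; use Vc in \<open>auto intro!: eq_matI\<close>)+
  thus "orthogonal_matrix (Suc m) (blk 1 V)"
    unfolding orthogonal_matrix_def T using Vc by (auto simp: blk_def)
  assume M: "M \<in> carrier_mat m m"
  have "blk 1 (transpose_mat V) * blk l M = blk (1 * l) (transpose_mat V * M)"
    unfolding blk_def by (rule block_diag_mult) (use Vc M in auto)
  also have "\<dots> * blk 1 V = blk (1 * l * 1) (transpose_mat V * M * V)"
    unfolding blk_def by (rule block_diag_mult) (use Vc M in auto)
  finally show "transpose_mat (blk 1 V) * blk l M * blk 1 V = blk l (transpose_mat V * M * V)"
    unfolding T by simp
qed

(* Spectral theorem: a real symmetric matrix is diagonalised by an orthogonal change of basis.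
   Induction on the size, splitting off one eigenvalue at a time by deflation. *)
lemma orthogonal_diagonalisation:
  fixes A :: "real mat"
  assumes "A \<in> carrier_mat n n" "transpose_mat A = A"
  shows "\<exists>U d. orthogonal_matrix n U \<and> transpose_mat U * A * U = diag_matrix n d"
  using assms
proof (induction n arbitrary: A)
  case 0
  show ?case
    by (intro exI[of _ "1\<^sub>m 0"] exI[of _ "\<lambda>_. 0"])
      (auto simp: orthogonal_matrix_def diag_matrix_def intro!: eq_matI)
next
  case (Suc m)
  let ?blk = "\<lambda>a M. four_block_mat (mat 1 1 (\<lambda>_. a)) (0\<^sub>m 1 m) (0\<^sub>m m 1) M"
  from symmetric_deflation[OF Suc.prems] obtain W l B where
    W: "W \<in> carrier_mat (Suc m) (Suc m)" "transpose_mat W = W" "W * W = 1\<^sub>m (Suc m)"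
    and B: "B \<in> carrier_mat m m" "transpose_mat B = B" and WAW: "W * A * W = ?blk l B"
    by blast
  from Suc.IH[OF B] obtain V d where V: "orthogonal_matrix m V"
    and VBV: "transpose_mat V * B * V = diag_matrix m d" by auto
  have "orthogonal_matrix (Suc m) W" using W by (simp add: orthogonal_matrix_def)
  note WV = orthogonal_matrix_mult[OF this orthogonal_block_extension(1)[OF V]]
  have "transpose_mat (W * ?blk 1 V) * A * (W * ?blk 1 V) = ?blk l (diag_matrix m d)"
    unfolding WV(2)[OF Suc.prems(1)] W(2) WAW orthogonal_block_extension(2)[OF V B(1)] VBV ..
  also have "\<dots> = diag_matrix (Suc m) (\<lambda>i. if i = 0 then l else d (i - 1))"
    by (rule eq_matI) (auto simp: diag_matrix_def)
  finally show ?case using WV(1) by blast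
qed


section \<open>Counting eigenvalues of a diagonalised matrix by sign\<close>

lemma order_prod_linear_factors: "order t (\<Prod>a\<leftarrow>xs. [:- a, 1:]) = count_list xs (t::real)"
proof (induction xs)
  case Nil thus ?case by (simp add: order_0I)
next
  case (Cons x xs)
  have "(\<Prod>a\<leftarrow>xs. [:- a, 1:]) \<noteq> (0::real poly)"
    by (auto simp: prod_list_zero_iff)
  hence "order t ([:- x, 1:] * (\<Prod>a\<leftarrow>xs. [:- a, 1:])) = order t [:- x, 1:] + order t (\<Prod>a\<leftarrow>xs. [:- a, 1:])"
    by (metis order_mult mult_eq_0_iff pCons_eq_0_iff one_neq_zero)
  thus ?case using Cons by (simp add: order_linear')
qed

lemma sum_count_list: "finite S \<Longrightarrow> (\<Sum>t\<in>S. count_list xs t) = length (filter (\<lambda>a. a \<in> S) xs)"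
proof (induction xs)
  case Nil thus ?case by simp
next
  case (Cons x xs)
  have "(\<Sum>t\<in>S. count_list (x#xs) t) = (\<Sum>t\<in>S. count_list xs t + (if x = t then 1 else 0))"
    by (intro sum.cong) auto
  also have "\<dots> = (\<Sum>t\<in>S. count_list xs t) + (if x \<in> S then 1 else 0)"
    using Cons.prems by (simp add: sum.distrib)
  finally show ?case using Cons by simp
qed

lemma count_roots_prod_linear_factors:
  fixes P :: "real \<Rightarrow> bool" and d :: "nat \<Rightarrow> real" and n :: nat
  defines "p \<equiv> \<Prod>a\<leftarrow>map d [0..<n]. [:- a, 1:]"
  shows "(\<Sum>t\<in>{t. poly p t = 0 \<and> P t}. order t p) = card {i. i < n \<and> P (d i)}"
proof -
  let ?xs = "map d [0..<n]"
  have S: "{t. poly p t = 0 \<and> P t} = {t \<in> set ?xs. P t}"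
    unfolding p_def by (auto simp: poly_prod_list prod_list_zero_iff)
  have "(\<Sum>t\<in>{t \<in> set ?xs. P t}. count_list ?xs t) = length (filter (\<lambda>a. a \<in> {t \<in> set ?xs. P t}) ?xs)"
    by (rule sum_count_list) auto
  also have "\<dots> = length (filter P ?xs)" by (intro arg_cong[where f=length] filter_cong) auto
  also have "\<dots> = card {i. i < n \<and> P (d i)}" unfolding length_filter_conv_card
    by (intro arg_cong[where f=card]) auto
  finally show ?thesis unfolding S unfolding p_def order_prod_linear_factors .
qed

lemma eigenvalue_counts_of_diagonalisation:
  fixes H U :: "real mat"
  assumes H: "H \<in> carrier_mat n n" and orth: "orthogonal_matrix n U"
    and D: "transpose_mat U * H * U = diag_matrix n d"
  shows "num_pos_eig H = card {i. i < n \<and> d i > 0}" "num_neg_eig H = card {i. i < n \<and> d i < 0}"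
proof -
  have U: "U \<in> carrier_mat n n" and UU: "transpose_mat U * U = 1\<^sub>m n" "U * transpose_mat U = 1\<^sub>m n"
    using orth by (auto simp: orthogonal_matrix_def)
  have "U * diag_matrix n d * transpose_mat U = (U * transpose_mat U) * H * (U * transpose_mat U)"
    unfolding D[symmetric] using U H by (simp add: assoc_mult_mat[of _ n n _ n _ n])
  hence HD: "H = U * diag_matrix n d * transpose_mat U" using UU H by simp
  have "similar_mat H (diag_matrix n d)" unfolding similar_mat_def similar_mat_wit_def
    by (rule exI[of _ U], rule exI[of _ "transpose_mat U"], use H U UU HD in auto)
  hence "char_poly H = char_poly (diag_matrix n d)" by (rule char_poly_similar)
  also have "\<dots> = (\<Prod>a\<leftarrow>diag_mat (diag_matrix n d). [:- a, 1:])"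
    by (rule char_poly_upper_triangular[OF diag_matrix_carrier])
      (auto simp: diag_matrix_def upper_triangular_def)
  also have "diag_mat (diag_matrix n d) = map d [0..<n]"
    unfolding diag_matrix_def diag_mat_def by auto
  finally have cp: "char_poly H = (\<Prod>a\<leftarrow>map d [0..<n]. [:- a, 1:])" .
  show "num_pos_eig H = card {i. i < n \<and> d i > 0}" "num_neg_eig H = card {i. i < n \<and> d i < 0}"
    unfolding num_pos_eig_def num_neg_eig_def cp by (rule count_roots_prod_linear_factors)+
qed

section \<open>Diagonal quadratic forms that are negative on a given vector\<close>

definition diag_form :: "nat \<Rightarrow> (nat \<Rightarrow> real) \<Rightarrow> (nat \<Rightarrow> real) \<Rightarrow> (nat \<Rightarrow> real) \<Rightarrow> real" where
  "diag_form n d x y = (\<Sum>i<n. d i * x i * y i)"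

lemma diag_form_unit:
  assumes "i < n"
  shows "diag_form n d (\<lambda>k. if k = i then a else 0) y = d i * a * y i"
  using assms unfolding diag_form_def by (simp add: if_distrib[where f="\<lambda>x. _ * x * _"] cong: if_cong)

lemma diag_form_add_left:
  "diag_form n d (\<lambda>k. x k + x' k) y = diag_form n d x y + diag_form n d x' y"
  unfolding diag_form_def by (simp add: algebra_simps sum.distrib)

lemma diag_form_scale_left: "diag_form n d (\<lambda>k. a * x k) y = a * diag_form n d x y"
  unfolding diag_form_def by (simp add: algebra_simps sum_distrib_left)

lemma corrected_form_pos_imp_signs:
  fixes d \<beta> :: "nat \<Rightarrow> real"
  assumes pos: "\<And>x. \<exists>i<n. x i \<noteq> 0 \<Longrightarrow>
      diag_form n d x x - \<kappa> * (diag_form n d x \<beta>)^2 / diag_form n d \<beta> \<beta> > 0"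
  shows "\<forall>i<n. d i \<noteq> 0" and "\<And>i j. \<lbrakk>i < n; j < n; d i < 0; d j < 0\<rbrakk> \<Longrightarrow> i = j"
proof -
  let ?p = "diag_form n d \<beta> \<beta>" and ?e = "\<lambda>i k. if k = i then 1 else (0::real)"
  have unit: "d i - \<kappa> * (d i * \<beta> i)^2 / ?p > 0" if i: "i < n" for i
    using pos[of "?e i"] i by (auto simp: diag_form_unit)
  show "\<forall>i<n. d i \<noteq> 0" using unit by fastforce
  fix i j assume i: "i < n" and j: "j < n" and di: "d i < 0" and dj: "d j < 0"
  show "i = j"
  proof (rule ccontr)
    assume ij: "i \<noteq> j"
    have "\<beta> i \<noteq> 0" using unit[OF i] di by (cases "\<beta> i = 0") auto
    define a b where "a = d j * \<beta> j" and "b = - (d i * \<beta> i)"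
    define x where "x = (\<lambda>k. a * ?e i k + b * ?e j k)"
    have xi: "x i = a" and xj: "x j = b" using ij by (simp_all add: x_def)
    have form: "diag_form n d x y = a * (d i * y i) + b * (d j * y j)" for y
      unfolding x_def using i j by (simp add: diag_form_add_left diag_form_scale_left diag_form_unit)
    have "x j \<noteq> 0" using \<open>\<beta> i \<noteq> 0\<close> di by (simp add: xj b_def)
    hence "diag_form n d x x - \<kappa> * (diag_form n d x \<beta>)^2 / ?p > 0" using j by (intro pos) auto
    moreover have "diag_form n d x \<beta> = 0" unfolding form a_def b_def by simp
    moreover have "diag_form n d x x = d i * a^2 + d j * b^2"
      unfolding form xi xj by (simp add: power2_eq_square)
    moreover have "d i * a^2 \<le> 0" "d j * b^2 \<le> 0"
      using di dj by (simp_all add: mult_nonpos_nonneg)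
    ultimately show False by simp
  qed
qed

(* Shifting x along \<beta> to kill the unique negative coordinate m shows that the form is positive
   semidefinite on the resulting vector, with equality only at 0. *)
lemma shift_to_positive_part:
  fixes d x \<beta> :: "nat \<Rightarrow> real"
  assumes m: "m < n" and pos: "\<And>i. i < n \<Longrightarrow> i \<noteq> m \<Longrightarrow> d i > 0" and bm: "\<beta> m \<noteq> 0"
  defines "t \<equiv> - x m / \<beta> m"
  shows "diag_form n d x x + 2 * t * diag_form n d x \<beta> + t^2 * diag_form n d \<beta> \<beta> \<ge> 0"
    and "diag_form n d x x + 2 * t * diag_form n d x \<beta> + t^2 * diag_form n d \<beta> \<beta> = 0
      \<Longrightarrow> \<forall>i<n. x i + t * \<beta> i = 0"
proof -
  let ?y = "\<lambda>i. x i + t * \<beta> i"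
  have "diag_form n d x x + 2 * t * diag_form n d x \<beta> + t^2 * diag_form n d \<beta> \<beta>
      = (\<Sum>i<n. d i * ?y i ^ 2)"
    unfolding diag_form_def
    by (simp add: power2_eq_square algebra_simps sum.distrib sum_distrib_left)
  also have "\<dots> = (\<Sum>i\<in>{..<n}-{m}. d i * ?y i ^ 2)"
    using m bm by (subst sum.remove[of _ m]) (auto simp: t_def)
  finally have eq: "diag_form n d x x + 2 * t * diag_form n d x \<beta> + t^2 * diag_form n d \<beta> \<beta>
      = (\<Sum>i\<in>{..<n}-{m}. d i * ?y i ^ 2)" .
  have nonneg: "\<forall>i\<in>{..<n}-{m}. d i * ?y i ^ 2 \<ge> 0" by (auto intro!: mult_nonneg_nonneg less_imp_le[OF pos])
  thus "diag_form n d x x + 2 * t * diag_form n d x \<beta> + t^2 * diag_form n d \<beta> \<beta> \<ge> 0"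
    unfolding eq by (intro sum_nonneg) (use nonneg in blast)
  assume "diag_form n d x x + 2 * t * diag_form n d x \<beta> + t^2 * diag_form n d \<beta> \<beta> = 0"
  hence "\<forall>i\<in>{..<n}-{m}. d i * ?y i ^ 2 = 0"
    unfolding eq by (subst (asm) sum_nonneg_eq_0_iff) (use nonneg in auto)
  moreover have "?y m = 0" using bm by (simp add: t_def)
  ultimately show "\<forall>i<n. ?y i = 0" using pos by force
qed


(* Conversely, a single negative coefficient and \<kappa> > 1 make the corrected form positive definite;
   this is a reverse Cauchy-Schwarz inequality for a form of Lorentzian signature. *)
lemma one_negative_imp_corrected_form_pos:
  fixes d x \<beta> :: "nat \<Rightarrow> real"
  assumes \<kappa>: "\<kappa> > 1" and neg: "diag_form n d \<beta> \<beta> < 0"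
    and m: "m < n" and pos: "\<And>i. i < n \<Longrightarrow> i \<noteq> m \<Longrightarrow> d i > 0" and x: "\<exists>i<n. x i \<noteq> 0"
  shows "diag_form n d x x - \<kappa> * (diag_form n d x \<beta>)^2 / diag_form n d \<beta> \<beta> > 0"
proof (rule ccontr)
  define A B C where "A = diag_form n d x x" and "B = diag_form n d x \<beta>" and "C = diag_form n d \<beta> \<beta>"
  have C: "C < 0" using neg by (simp add: C_def)
  have bm: "\<beta> m \<noteq> 0"
  proof
    assume "\<beta> m = 0"
    hence "diag_form n d \<beta> \<beta> = (\<Sum>i\<in>{..<n}-{m}. d i * (\<beta> i * \<beta> i))"
      unfolding diag_form_def using m by (subst sum.remove[of _ m]) (auto simp: mult.assoc)
    also have "\<dots> \<ge> 0" by (intro sum_nonneg) (simp add: less_imp_le pos)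
    finally show False using neg by simp
  qed
  define t where "t = - x m / \<beta> m"
  have q: "A + 2 * t * B + t^2 * C \<ge> 0"
    using shift_to_positive_part(1)[where x = x and \<beta> = \<beta> and d = d, OF m pos bm] unfolding A_def B_def C_def t_def .
  assume "\<not> A - \<kappa> * B^2 / C > 0"
  hence h: "A * C - \<kappa> * B^2 \<ge> 0" using C by (simp add: field_simps not_less)
  have "C * (A + 2 * t * B + t^2 * C) \<le> 0" using q C by (simp add: mult_nonpos_nonneg)
  hence "(C * t + B)^2 \<le> B^2 - A * C" by (simp add: power2_eq_square algebra_simps)
  hence "(C * t + B)^2 + (\<kappa> - 1) * B^2 \<le> 0" using h by (simp add: algebra_simps)
  moreover have "(\<kappa> - 1) * B^2 \<ge> 0" using \<kappa> by simp
  ultimately have "(C * t + B)^2 = 0" "(\<kappa> - 1) * B^2 = 0"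
    by (smt (verit) zero_le_power2)+
  hence B0: "B = 0" and t0: "t = 0" using C \<kappa> by auto
  have "A \<le> 0" using h B0 C by (simp add: mult_le_0_iff zero_le_mult_iff)
  hence "A + 2 * t * B + t^2 * C = 0" using q t0 by simp
  hence "\<forall>i<n. x i + t * \<beta> i = 0"
    using shift_to_positive_part(2)[where x = x and \<beta> = \<beta> and d = d, OF m pos bm] unfolding A_def B_def C_def t_def by blast
  thus False using x t0 by auto
qed


lemma signature_one_negative_iff:
  fixes d :: "nat \<Rightarrow> real"
  shows "card {i. i < n \<and> d i > 0} = n - 1 \<and> card {i. i < n \<and> d i < 0} = 1 \<longleftrightarrow>
    (\<exists>m<n. d m < 0 \<and> (\<forall>i<n. i \<noteq> m \<longrightarrow> d i > 0))"
    (is "card ?P = _ \<and> card ?N = _ \<longleftrightarrow> _")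
proof
  assume cnt: "card ?P = n - 1 \<and> card ?N = 1"
  then obtain m where neg: "?N = {m}" by (meson card_1_singletonE)
  hence m: "m < n" "d m < 0" by auto
  have "card (?P \<union> ?N) = card {..<n}"
    using cnt m by (subst card_Un_disjoint) auto
  hence all: "?P \<union> ?N = {..<n}" by (intro card_subset_eq) auto
  have "d i > 0" if "i < n" "i \<noteq> m" for i
  proof -
    have "i \<in> ?P \<union> ?N" using all that by blast
    thus ?thesis using neg that(2) by blast
  qed
  thus "\<exists>m<n. d m < 0 \<and> (\<forall>i<n. i \<noteq> m \<longrightarrow> d i > 0)" using m by blast
next
  assume "\<exists>m<n. d m < 0 \<and> (\<forall>i<n. i \<noteq> m \<longrightarrow> d i > 0)"
  then obtain m where m: "m < n" "d m < 0" and pos: "\<And>i. i < n \<Longrightarrow> i \<noteq> m \<Longrightarrow> d i > 0" by blast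
  have "?N = {m}"
  proof (intro equalityI subsetI)
    fix i assume "i \<in> ?N"
    thus "i \<in> {m}" using pos[of i] by (cases "i = m") auto
  qed (use m in auto)
  moreover have "?P = {..<n} - {m}"
  proof (intro equalityI subsetI)
    fix i assume "i \<in> ?P"
    thus "i \<in> {..<n} - {m}" using m by auto
  qed (use pos in auto)
  ultimately show "card ?P = n - 1 \<and> card ?N = 1" using m by simp
qed


lemma corrected_form_pos_iff_one_negative:
  fixes d \<beta> :: "nat \<Rightarrow> real"
  assumes \<kappa>: "\<kappa> > 1" and neg: "diag_form n d \<beta> \<beta> < 0"
  shows "(\<forall>x. (\<exists>i<n. x i \<noteq> 0) \<longrightarrow> diag_form n d x x - \<kappa> * (diag_form n d x \<beta>)^2 / diag_form n d \<beta> \<beta> > 0)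
    \<longleftrightarrow> (\<exists>m<n. d m < 0 \<and> (\<forall>i<n. i \<noteq> m \<longrightarrow> d i > 0))"
proof
  assume pos: "\<forall>x. (\<exists>i<n. x i \<noteq> 0) \<longrightarrow> diag_form n d x x - \<kappa> * (diag_form n d x \<beta>)^2 / diag_form n d \<beta> \<beta> > 0"
  have "diag_form n d x x - \<kappa> * (diag_form n d x \<beta>)^2 / diag_form n d \<beta> \<beta> > 0"
    if "\<exists>i<n. x i \<noteq> 0" for x using pos that by blast
  note signs = corrected_form_pos_imp_signs[OF this]
  obtain m where m: "m < n" "d m < 0"
  proof (rule ccontr)
    assume "\<not> thesis"
    hence "\<forall>i<n. d i \<ge> 0" using that by (meson not_le)
    hence "diag_form n d \<beta> \<beta> \<ge> 0" unfolding diag_form_def by (auto simp: mult.assoc intro!: sum_nonneg)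
    thus False using neg by simp
  qed
  have "d i > 0" if "i < n" "i \<noteq> m" for i
    using signs(1) signs(2)[of i m] that m by force
  thus "\<exists>m<n. d m < 0 \<and> (\<forall>i<n. i \<noteq> m \<longrightarrow> d i > 0)" using m by blast
qed (use one_negative_imp_corrected_form_pos[OF \<kappa> neg] in blast)


section \<open>Quadratic forms of symmetric matrices\<close>

lemma bilinear_form_in_eigenbasis:
  fixes M U :: "real mat"
  assumes M: "M \<in> carrier_mat n n" and orth: "orthogonal_matrix n U"
    and D: "transpose_mat U * M * U = diag_matrix n d"
    and x: "x \<in> carrier_vec n" and y: "y \<in> carrier_vec n"
  shows "x \<bullet> (M *\<^sub>v y) = diag_form n d (\<lambda>i. (transpose_mat U *\<^sub>v x) $ i) (\<lambda>i. (transpose_mat U *\<^sub>v y) $ i)"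
proof -
  have U: "U \<in> carrier_mat n n" and UU: "U * transpose_mat U = 1\<^sub>m n"
    using orth by (auto simp: orthogonal_matrix_def)
  let ?D = "diag_matrix n d" and ?x = "transpose_mat U *\<^sub>v x" and ?y = "transpose_mat U *\<^sub>v y"
  have "U * ?D * transpose_mat U = (U * transpose_mat U) * M * (U * transpose_mat U)"
    unfolding D[symmetric] using U M by (simp add: assoc_mult_mat[of _ n n _ n _ n])
  hence "M = U * ?D * transpose_mat U" using UU M by simp
  hence "M *\<^sub>v y = U *\<^sub>v (?D *\<^sub>v ?y)"
    using U y by (simp add: assoc_mult_mat_vec[of _ n n _ n])
  hence "x \<bullet> (M *\<^sub>v y) = ?x \<bullet> (?D *\<^sub>v ?y)"
    using transpose_vec_mult_scalar[OF U mult_mat_vec_carrier[OF diag_matrix_carrier] x, of ?y] U y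
    by simp
  also have "?D *\<^sub>v ?y = vec n (\<lambda>i. d i * ?y $ i)"
  proof (rule eq_vecI)
    fix i assume "i < dim_vec (vec n (\<lambda>i. d i * ?y $ i))"
    hence i: "i < n" by simp
    have "(?D *\<^sub>v ?y) $ i = (\<Sum>k<n. (if i = k then d i else 0) * ?y $ k)"
      using i U by (simp add: diag_matrix_def scalar_prod_def row_def atLeast0LessThan)
    also have "\<dots> = d i * ?y $ i" using i by (simp add: if_distrib[where f="\<lambda>a. a * _"] cong: if_cong)
    finally show "(?D *\<^sub>v ?y) $ i = vec n (\<lambda>i. d i * ?y $ i) $ i" using i by simp
  qed (simp add: diag_matrix_def)
  also have "?x \<bullet> vec n (\<lambda>i. d i * ?y $ i) = diag_form n d (\<lambda>i. ?x $ i) (\<lambda>i. ?y $ i)"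
    unfolding diag_form_def scalar_prod_def
    by (simp add: atLeast0LessThan mult_ac del: index_mult_mat_vec)
  finally show ?thesis .
qed

lemma diag_form_cong:
  "(\<And>i. i < n \<Longrightarrow> x i = x' i) \<Longrightarrow> (\<And>i. i < n \<Longrightarrow> y i = y' i) \<Longrightarrow>
    diag_form n d x y = diag_form n d x' y'"
  unfolding diag_form_def by simp

lemma orthogonal_change_of_coordinates:
  fixes U :: "real mat" and P :: "(nat \<Rightarrow> real) \<Rightarrow> bool"
  assumes orth: "orthogonal_matrix n U" and P: "\<And>a b. (\<And>i. i < n \<Longrightarrow> a i = b i) \<Longrightarrow> P a = P b"
  shows "(\<forall>x\<in>carrier_vec n. x \<noteq> 0\<^sub>v n \<longrightarrow> P (\<lambda>i. (transpose_mat U *\<^sub>v x) $ i))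
    \<longleftrightarrow> (\<forall>a. (\<exists>i<n. a i \<noteq> 0) \<longrightarrow> P a)"
proof -
  have U: "U \<in> carrier_mat n n" and UU: "transpose_mat U * U = 1\<^sub>m n" "U * transpose_mat U = 1\<^sub>m n"
    using orth by (auto simp: orthogonal_matrix_def)
  have inv_left: "transpose_mat U *\<^sub>v (U *\<^sub>v vec n a) = vec n a" for a
    using U UU(1) by (simp add: assoc_mult_mat_vec[symmetric, of _ n n _ n])
  have inv_right: "U *\<^sub>v (transpose_mat U *\<^sub>v x) = x" if "x \<in> carrier_vec n" for x
    using U UU(2) that by (simp add: assoc_mult_mat_vec[symmetric, of _ n n _ n])
  have zero: "A *\<^sub>v 0\<^sub>v n = 0\<^sub>v n" if "A \<in> carrier_mat n n" for A :: "real mat"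
    using that by (intro eq_vecI) (auto simp: scalar_prod_def)
  show ?thesis
  proof (intro iffI allI ballI impI)
    fix a :: "nat \<Rightarrow> real" assume a: "\<exists>i<n. a i \<noteq> 0"
      and H: "\<forall>x\<in>carrier_vec n. x \<noteq> 0\<^sub>v n \<longrightarrow> P (\<lambda>i. (transpose_mat U *\<^sub>v x) $ i)"
    have "U *\<^sub>v vec n a \<noteq> 0\<^sub>v n"
    proof
      assume "U *\<^sub>v vec n a = 0\<^sub>v n"
      hence "vec n a = 0\<^sub>v n" using inv_left[of a] zero[of "transpose_mat U"] U by simp
      thus False using a by (auto simp: vec_eq_iff)
    qed
    hence "P (\<lambda>i. (transpose_mat U *\<^sub>v (U *\<^sub>v vec n a)) $ i)" using H U by auto
    thus "P a" unfolding inv_left by (rule P[THEN iffD1, rotated]) simp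
  next
    fix x :: "real vec" assume x: "x \<in> carrier_vec n" "x \<noteq> 0\<^sub>v n" and H: "\<forall>a. (\<exists>i<n. a i \<noteq> 0) \<longrightarrow> P a"
    have "\<exists>i<n. (transpose_mat U *\<^sub>v x) $ i \<noteq> 0"
    proof (rule ccontr)
      assume "\<not> ?thesis"
      hence "transpose_mat U *\<^sub>v x = 0\<^sub>v n" using U by (intro eq_vecI) auto
      thus False using inv_right[OF x(1)] zero[OF U] x(2) by simp
    qed
    thus "P (\<lambda>i. (transpose_mat U *\<^sub>v x) $ i)" using H by blast
  qed
qed

lemma corrected_form_pos_iff_signature:
  fixes M :: "real mat"
  assumes M: "M \<in> carrier_mat n n" and sym: "transpose_mat M = M" and y: "y \<in> carrier_vec n"
    and \<kappa>: "\<kappa> > 1" and neg: "y \<bullet> (M *\<^sub>v y) < 0"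
  shows "(\<forall>x\<in>carrier_vec n. x \<noteq> 0\<^sub>v n \<longrightarrow>
      x \<bullet> (M *\<^sub>v x) - \<kappa> * (x \<bullet> (M *\<^sub>v y))^2 / (y \<bullet> (M *\<^sub>v y)) > 0)
    \<longleftrightarrow> has_signature M (n - 1) 1"
proof -
  from orthogonal_diagonalisation[OF M sym] obtain U d where U: "orthogonal_matrix n U"
    and D: "transpose_mat U * M * U = diag_matrix n d" by auto
  let ?c = "\<lambda>x i. (transpose_mat U *\<^sub>v x) $ i"
  let ?F = "\<lambda>a. diag_form n d a a - \<kappa> * (diag_form n d a (?c y))^2 / diag_form n d (?c y) (?c y)"
  note coords = bilinear_form_in_eigenbasis[OF M U D]
  have "(\<forall>x\<in>carrier_vec n. x \<noteq> 0\<^sub>v n \<longrightarrow>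
      x \<bullet> (M *\<^sub>v x) - \<kappa> * (x \<bullet> (M *\<^sub>v y))^2 / (y \<bullet> (M *\<^sub>v y)) > 0)
    \<longleftrightarrow> (\<forall>x\<in>carrier_vec n. x \<noteq> 0\<^sub>v n \<longrightarrow> ?F (?c x) > 0)"
    using coords y by auto
  also have "\<dots> \<longleftrightarrow> (\<forall>a. (\<exists>i<n. a i \<noteq> 0) \<longrightarrow> ?F a > 0)"
    by (rule orthogonal_change_of_coordinates[OF U]) (simp cong: diag_form_cong)
  also have "\<dots> \<longleftrightarrow> (\<exists>m<n. d m < 0 \<and> (\<forall>i<n. i \<noteq> m \<longrightarrow> d i > 0))"
    by (rule corrected_form_pos_iff_one_negative[OF \<kappa>]) (use neg coords[OF y y] in simp)
  also have "\<dots> \<longleftrightarrow> has_signature M (n - 1) 1"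
    unfolding has_signature_def eigenvalue_counts_of_diagonalisation[OF M U D]
    by (rule signature_one_negative_iff[symmetric])
  finally show ?thesis .
qed

section \<open>The symmetric trilinear form of the cubic and the derivatives of \<phi> and \<omega>\<close>

definition sym_coeff :: "(nat \<Rightarrow> nat \<Rightarrow> nat \<Rightarrow> real) \<Rightarrow> nat \<Rightarrow> nat \<Rightarrow> nat \<Rightarrow> real" where
  "sym_coeff c p q r = c p q r + c p r q + c q p r + c q r p + c r p q + c r q p"

(* The polarisation T of \<phi>: the symmetric trilinear form with T(z,z,z) = 6 \<phi>(z).  In terms of it,
   d\<phi>/dz_i (z) = T(e_i,z,z)/2 and d^2\<phi>/dz_i dz_j (z) = T(e_i,e_j,z). *)
definition trilinear :: "nat \<Rightarrow> (nat \<Rightarrow> nat \<Rightarrow> nat \<Rightarrow> real) \<Rightarrow>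
    (nat \<Rightarrow> 'a::real_normed_field) \<Rightarrow> (nat \<Rightarrow> 'a) \<Rightarrow> (nat \<Rightarrow> 'a) \<Rightarrow> 'a" where
  "trilinear h c u v w =
     (\<Sum>p=1..h. \<Sum>q=1..h. \<Sum>r=1..h. of_real (sym_coeff c p q r) * u p * v q * w r)"

definition unit_coord :: "nat \<Rightarrow> nat \<Rightarrow> 'a::real_normed_field" where
  "unit_coord i = (\<lambda>p. if p = i then 1 else 0)"

(* T is symmetric in all three arguments (the transpositions (12) and (23) generate S_3) and trilinear. *)
lemma sum3_swap23: "(\<Sum>p\<in>S. \<Sum>q\<in>S. \<Sum>r\<in>S. F p q r) = (\<Sum>p\<in>S. \<Sum>q\<in>S. \<Sum>r\<in>S. F p r q)"
  by (intro sum.cong refl sum.swap)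

lemma trilinear_swap12: "trilinear h c u v w = trilinear h c v u w"
  unfolding trilinear_def sym_coeff_def by (subst sum.swap) (simp add: ac_simps)

lemma trilinear_swap23: "trilinear h c u v w = trilinear h c u w v"
  unfolding trilinear_def sym_coeff_def by (subst sum3_swap23) (simp add: ac_simps)

lemma trilinear_add:
  "trilinear h c (\<lambda>p. u p + v p) w s = trilinear h c u w s + trilinear h c v w s"
  "trilinear h c w (\<lambda>p. u p + v p) s = trilinear h c w u s + trilinear h c w v s"
  "trilinear h c w s (\<lambda>p. u p + v p) = trilinear h c w s u + trilinear h c w s v"
  unfolding trilinear_def by (simp_all add: sum.distrib algebra_simps)

lemma trilinear_scale:
  "trilinear h c (\<lambda>p. k * u p) w s = k * trilinear h c u w s"
  "trilinear h c w (\<lambda>p. k * u p) s = k * trilinear h c w u s"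
  "trilinear h c w s (\<lambda>p. k * u p) = k * trilinear h c w s u"
  unfolding trilinear_def by (simp_all add: sum_distrib_left algebra_simps)

lemmas trilinear_linear = trilinear_add trilinear_scale

(* Polarisation: each of the six terms of sym_coeff contributes one copy of \<phi>(z). *)
lemma cubic_form_trilinear: "cubic_form h c z = trilinear h c z z z / 6"
proof -
  define G where "G = (\<lambda>p q r. of_real (c p q r) * z p * z q * z r)"
  let ?S = "\<lambda>F. (\<Sum>p=1..h. \<Sum>q=1..h. \<Sum>r=1..h. F p q r)"
  have swap12: "?S (\<lambda>p q r. F q p r) = ?S F" for F by (rule sum.swap)
  have swap23: "?S (\<lambda>p q r. F p r q) = ?S F" for F by (rule sum3_swap23[symmetric])
  have "trilinear h c z z z = ?S (\<lambda>p q r. G p q r + G p r q + G q p r + G q r p + G r p q + G r q p)"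
    unfolding trilinear_def G_def sym_coeff_def by (intro sum.cong refl) (simp add: algebra_simps)
  also have "\<dots> = ?S G + ?S (\<lambda>p q r. G p r q) + ?S (\<lambda>p q r. G q p r) + ?S (\<lambda>p q r. G q r p)
      + ?S (\<lambda>p q r. G r p q) + ?S (\<lambda>p q r. G r q p)"
    by (simp add: sum.distrib)
  also have "\<dots> = 6 * ?S G"
    using swap12[of G] swap23[of G] swap12[of "\<lambda>p q r. G p r q"] swap23[of "\<lambda>p q r. G q p r"]
      swap12[of "\<lambda>p q r. G r p q"]
    by simp
  finally show ?thesis unfolding cubic_form_def G_def by simp
qed

lemma pd_polynomial_line:
  fixes F :: "(nat \<Rightarrow> 'a::real_normed_field) \<Rightarrow> 'a"
  assumes "\<And>t. F (\<lambda>p. z p + t * unit_coord i p) = a + b * t + c * t^2 + d * t^3"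
  shows "pd i F z = b"
proof -
  have "z(i := z i + t) = (\<lambda>p. z p + t * unit_coord i p)" for t by (auto simp: unit_coord_def)
  hence "(\<lambda>t. F (z(i := z i + t))) = (\<lambda>t. a + b * t + c * t^2 + d * t^3)" using assms by simp
  moreover have "((\<lambda>t. a + b * t + c * t^2 + d * t^3) has_field_derivative b) (at 0)"
    by (auto intro!: derivative_eq_intros)
  ultimately show ?thesis unfolding pd_def by (simp add: DERIV_imp_deriv)
qed

lemma pd_cubic_form: "pd i (cubic_form h c) z = trilinear h c (unit_coord i) z z / 2"
proof (rule pd_polynomial_line)
  fix t
  show "cubic_form h c (\<lambda>p. z p + t * unit_coord i p) = cubic_form h c z
     + trilinear h c (unit_coord i) z z / 2 * t + trilinear h c (unit_coord i) (unit_coord i) z / 2 * t^2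
     + cubic_form h c (unit_coord i) * t^3"
    unfolding cubic_form_trilinear
    by (simp add: trilinear_linear power2_eq_square power3_eq_cube field_simps,
        simp add: trilinear_swap12 trilinear_swap23 algebra_simps)
qed

lemma pd_quadratic:
  "pd j (\<lambda>w. trilinear h c (unit_coord i) w w / 2) z = trilinear h c (unit_coord i) (unit_coord j) z"
proof (rule pd_polynomial_line)
  fix t
  show "trilinear h c (unit_coord i) (\<lambda>p. z p + t * unit_coord j p) (\<lambda>p. z p + t * unit_coord j p) / 2 =
    trilinear h c (unit_coord i) z z / 2 + trilinear h c (unit_coord i) (unit_coord j) z * t
    + trilinear h c (unit_coord i) (unit_coord j) (unit_coord j) / 2 * t^2 + 0 * t^3"
    by (simp add: trilinear_linear power2_eq_square field_simps, simp add: trilinear_swap23 algebra_simps)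
qed

lemma pd_const: "pd j (\<lambda>w. a) z = 0"
  by (rule pd_polynomial_line[where a=a and c=0 and d=0]) simp

lemma pd_coord: "pd j (\<lambda>w. w k) z = unit_coord j k"
  by (rule pd_polynomial_line[where a="z k" and c=0 and d=0]) (simp add: mult.commute)

lemma hessian_entry:
  assumes "i < h" "j < h"
  shows "hessian h c y $$ (i,j) = trilinear h c (unit_coord (i+1)) (unit_coord (j+1)) y"
proof -
  have "pd (j+1) (cubic_form h c) = (\<lambda>z::nat \<Rightarrow> real. trilinear h c (unit_coord (j+1)) z z / 2)"
    by (rule ext) (rule pd_cubic_form)
  hence "hessian h c y $$ (i,j) = pd (i+1) (\<lambda>z. trilinear h c (unit_coord (j+1)) z z / 2) y"
    using assms unfolding hessian_def by simp
  also have "\<dots> = trilinear h c (unit_coord (j+1)) (unit_coord (i+1)) y" by (rule pd_quadratic)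
  finally show ?thesis by (simp only: trilinear_swap12)
qed

lemma omega_entry:
  assumes "k < 2*h+2"
  shows "omega h c z $ k = (if k = 0 then - (trilinear h c z z z / 6)
     else if k \<le> h then trilinear h c (unit_coord k) z z / 2
     else if k = h+1 then 1 else z (k - (h+1)))"
  using assms unfolding omega_def by (simp add: cubic_form_trilinear pd_cubic_form)

lemma domega_entry:
  assumes "k < 2*h+2"
  shows "domega h c i z $ k = (if k = 0 then - (trilinear h c (unit_coord i) z z / 2)
     else if k \<le> h then trilinear h c (unit_coord k) (unit_coord i) z
     else if k = h+1 then 0 else unit_coord i (k - (h+1)))"
proof -
  have neg_cubic: "pd i (\<lambda>w. - (trilinear h c w w w / 6)) z = - (trilinear h c (unit_coord i) z z / 2)"
  proof (rule pd_polynomial_line)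
    fix t
    show "- (trilinear h c (\<lambda>p. z p + t * unit_coord i p) (\<lambda>p. z p + t * unit_coord i p)
        (\<lambda>p. z p + t * unit_coord i p) / 6) = - (trilinear h c z z z / 6)
      + - (trilinear h c (unit_coord i) z z / 2) * t + - (trilinear h c (unit_coord i) (unit_coord i) z / 2) * t^2
      + - (trilinear h c (unit_coord i) (unit_coord i) (unit_coord i) / 6) * t^3"
      by (simp add: trilinear_linear power2_eq_square power3_eq_cube field_simps,
          simp add: trilinear_swap12 trilinear_swap23 algebra_simps)
  qed
  have "domega h c i z $ k = pd i (\<lambda>w. omega h c w $ k) z" unfolding domega_def using assms by simp
  also have "(\<lambda>w. omega h c w $ k) = (\<lambda>w. if k = 0 then - (trilinear h c w w w / 6)
     else if k \<le> h then trilinear h c (unit_coord k) w w / 2 else if k = h+1 then 1 else w (k - (h+1)))"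
    using omega_entry[OF assms] by auto
  finally show ?thesis
    by (cases "k = 0"; cases "k \<le> h"; cases "k = h+1") (auto simp: neg_cubic pd_quadratic pd_const pd_coord)
qed


section \<open>The symplectic pairings between \<omega>, d\<omega>/dz_j and their conjugates\<close>

definition im_vec :: "(nat \<Rightarrow> complex) \<Rightarrow> nat \<Rightarrow> real" where
  "im_vec z = (\<lambda>p. Im (z p))"

definition complexify :: "(nat \<Rightarrow> real) \<Rightarrow> nat \<Rightarrow> complex" where
  "complexify u = (\<lambda>p. complex_of_real (u p))"

lemma trilinear_complexify:
  "trilinear h c (complexify u) (complexify v) (complexify w) = complex_of_real (trilinear h c u v w)"
  unfolding trilinear_def complexify_def by simp

lemma unit_coord_complexify: "(unit_coord k :: nat \<Rightarrow> complex) = complexify (unit_coord k)"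
  by (auto simp: unit_coord_def complexify_def)

(* T has real coefficients, so it commutes with complex conjugation. *)
lemma trilinear_cnj:
  "cnj (trilinear h c u v w) = trilinear h c (\<lambda>p. cnj (u p)) (\<lambda>p. cnj (v p)) (\<lambda>p. cnj (w p))"
  unfolding trilinear_def by (simp add: cnj_sum)

lemma cnj_unit_coord [simp]: "cnj (unit_coord j k :: complex) = unit_coord j k"
  by (simp add: unit_coord_def)

lemma sum_unit_coord:
  "j \<in> {1..h} \<Longrightarrow> (\<Sum>k=Suc 0..h. f k * (unit_coord j k :: complex)) = f j"
  "j \<in> {1..h} \<Longrightarrow> (\<Sum>k=Suc 0..h. (unit_coord j k :: complex) * f k) = f j"
  unfolding unit_coord_def
  by (simp_all add: if_distrib[where f="\<lambda>x. _ * x"] if_distrib[where f="\<lambda>x. x * _"] cong: if_cong)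

lemma trilinear_expand_first:
  "(\<Sum>k=Suc 0..h. w k * trilinear h c (unit_coord k) u v) = trilinear h c w u v"
proof -
  have "trilinear h c (unit_coord k) u v = (\<Sum>q=1..h. \<Sum>r=1..h. of_real (sym_coeff c k q r) * u q * v r)"
    if k: "k \<in> {1..h}" for k
  proof -
    have "trilinear h c (unit_coord k) u v = (\<Sum>p=1..h. if p = k then
        (\<Sum>q=1..h. \<Sum>r=1..h. of_real (sym_coeff c k q r) * u q * v r) else 0)"
      unfolding trilinear_def unit_coord_def by (intro sum.cong refl) auto
    thus ?thesis using k by simp
  qed
  hence "(\<Sum>k=1..h. w k * trilinear h c (unit_coord k) u v) =
      (\<Sum>k=1..h. w k * (\<Sum>q=1..h. \<Sum>r=1..h. of_real (sym_coeff c k q r) * u q * v r))"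
    by (intro sum.cong) auto
  thus ?thesis unfolding trilinear_def by (simp add: sum_distrib_left mult_ac)
qed

lemma sympl_split:
  "sympl h v w = v $ 0 * w $ (h+1) - v $ (h+1) * w $ 0
     + (\<Sum>k=1..h. v $ k * w $ (h+1+k) - v $ (h+1+k) * w $ k)"
  unfolding sympl_def by (subst sum.atLeast_Suc_atMost) auto

lemma dim_omega [simp]: "dim_vec (omega h c z) = 2*h+2" by (simp add: omega_def)
lemma dim_domega [simp]: "dim_vec (domega h c i z) = 2*h+2" by (simp add: domega_def)
lemma cconj_entry: "k < dim_vec v \<Longrightarrow> cconj v $ k = cnj (v $ k)" by (simp add: cconj_def)

(* To evaluate expressions in z and its conjugate, write z = X + i Y with X, Y real. *)
lemma split_real_imaginary:
  assumes "\<And>X Y. P (\<lambda>p. complexify X p + \<i> * complexify Y p) (\<lambda>p. complexify X p + (- \<i>) * complexify Y p) Y"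
  shows "P z (\<lambda>p. cnj (z p)) (im_vec z)"
proof -
  have "z = (\<lambda>p. complexify (\<lambda>p. Re (z p)) p + \<i> * complexify (im_vec z) p)"
    "(\<lambda>p. cnj (z p)) = (\<lambda>p. complexify (\<lambda>p. Re (z p)) p + (- \<i>) * complexify (im_vec z) p)"
    by (auto simp: complexify_def im_vec_def complex_eq_iff)
  thus ?thesis using assms by metis
qed

lemma i_times_i: "\<i> * (\<i> * x) = - (x::complex)"
  by (simp add: mult.assoc[symmetric])

lemma polarisation_identities:
  fixes X Y E F :: "nat \<Rightarrow> real"
  defines "u \<equiv> \<lambda>p. complexify X p + \<i> * complexify Y p"
    and "ub \<equiv> \<lambda>p. complexify X p + (- \<i>) * complexify Y p"
  shows "- (trilinear h c u u u) / 6 + trilinear h c ub ub ub / 6 + trilinear h c ub u u / 2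
      - trilinear h c u ub ub / 2 = \<i> * (4/3) * trilinear h c (complexify Y) (complexify Y) (complexify Y)"
    and "- (trilinear h c (complexify E) u u / 2) + trilinear h c ub (complexify E) u
      - trilinear h c (complexify E) ub ub / 2 = 2 * trilinear h c (complexify E) (complexify Y) (complexify Y)"
    and "trilinear h c (complexify E) ub ub / 2 + trilinear h c (complexify E) u u / 2
      - trilinear h c u (complexify E) ub = - 2 * trilinear h c (complexify E) (complexify Y) (complexify Y)"
    and "trilinear h c (complexify F) (complexify E) u - trilinear h c (complexify E) (complexify F) ub
      = 2 * \<i> * trilinear h c (complexify E) (complexify F) (complexify Y)"
  unfolding u_def ub_def
  by ((simp only: trilinear_linear); (simp add: trilinear_swap12 trilinear_swap23)?;
      (simp add: algebra_simps i_times_i)?; (simp add: field_simps)?)+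

lemma pairing_omega_omega:
  "sympl h (omega h c z) (cconj (omega h c z))
     = \<i> * (4/3) * complex_of_real (trilinear h c (im_vec z) (im_vec z) (im_vec z))"
proof -
  let ?w = "omega h c z" and ?zb = "\<lambda>p. cnj (z p)"
  have s: "(\<Sum>k=1..h. ?w $ k * cconj ?w $ (h+1+k) - ?w $ (h+1+k) * cconj ?w $ k)
     = (\<Sum>k=1..h. cnj (z k) * trilinear h c (unit_coord k) z z / 2 - z k * trilinear h c (unit_coord k) ?zb ?zb / 2)"
    by (intro sum.cong refl) (auto simp: cconj_entry omega_entry trilinear_cnj)
  have "sympl h ?w (cconj ?w) = - (trilinear h c z z z / 6) - cnj (- (trilinear h c z z z / 6))
     + (trilinear h c ?zb z z / 2 - trilinear h c z ?zb ?zb / 2)"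
    unfolding sympl_split s
    by (simp add: cconj_entry omega_entry sum_subtractf sum_divide_distrib[symmetric] trilinear_expand_first)
  also have "\<dots> = - (trilinear h c z z z) / 6 + trilinear h c ?zb ?zb ?zb / 6
      + trilinear h c ?zb z z / 2 - trilinear h c z ?zb ?zb / 2"
    by (simp add: trilinear_cnj)
  also have "\<dots> = \<i> * (4/3) * trilinear h c (complexify (im_vec z)) (complexify (im_vec z)) (complexify (im_vec z))"
    by (rule split_real_imaginary[where P = "\<lambda>z zb Y. - (trilinear h c z z z) / 6 + trilinear h c zb zb zb / 6
      + trilinear h c zb z z / 2 - trilinear h c z zb zb / 2
      = \<i> * (4/3) * trilinear h c (complexify Y) (complexify Y) (complexify Y)"], rule polarisation_identities(1))
  finally show ?thesis by (simp add: trilinear_complexify)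
qed

lemma pairing_domega_omega:
  assumes j: "j \<in> {1..h}"
  shows "sympl h (domega h c j z) (cconj (omega h c z))
    = 2 * complex_of_real (trilinear h c (unit_coord j) (im_vec z) (im_vec z))"
proof -
  let ?w = "omega h c z" and ?d = "domega h c j z" and ?zb = "\<lambda>p. cnj (z p)" and ?e = "unit_coord j"
  have s: "(\<Sum>k=1..h. ?d $ k * cconj ?w $ (h+1+k) - ?d $ (h+1+k) * cconj ?w $ k)
     = (\<Sum>k=1..h. cnj (z k) * trilinear h c (unit_coord k) ?e z - ?e k * (trilinear h c (unit_coord k) ?zb ?zb / 2))"
    by (intro sum.cong refl) (auto simp: cconj_entry omega_entry domega_entry trilinear_cnj)
  have "sympl h ?d (cconj ?w) = - (trilinear h c ?e z z / 2) + trilinear h c ?zb ?e z - trilinear h c ?e ?zb ?zb / 2"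
    unfolding sympl_split s using j
    by (simp add: cconj_entry omega_entry domega_entry sum_subtractf trilinear_expand_first sum_unit_coord
        sum_divide_distrib[symmetric])
  also have "\<dots> = 2 * trilinear h c (complexify (unit_coord j)) (complexify (im_vec z)) (complexify (im_vec z))"
    unfolding unit_coord_complexify
    by (rule split_real_imaginary[where P = "\<lambda>z zb Y. - (trilinear h c (complexify (unit_coord j)) z z / 2)
      + trilinear h c zb (complexify (unit_coord j)) z - trilinear h c (complexify (unit_coord j)) zb zb / 2
      = 2 * trilinear h c (complexify (unit_coord j)) (complexify Y) (complexify Y)"], rule polarisation_identities(2))
  finally show ?thesis by (simp add: trilinear_complexify)
qed

lemma pairing_omega_domega:
  assumes l: "l \<in> {1..h}"
  shows "sympl h (omega h c z) (cconj (domega h c l z))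
    = - 2 * complex_of_real (trilinear h c (unit_coord l) (im_vec z) (im_vec z))"
proof -
  let ?w = "omega h c z" and ?d = "domega h c l z" and ?zb = "\<lambda>p. cnj (z p)" and ?e = "unit_coord l"
  have s: "(\<Sum>k=1..h. ?w $ k * cconj ?d $ (h+1+k) - ?w $ (h+1+k) * cconj ?d $ k)
     = (\<Sum>k=1..h. trilinear h c (unit_coord k) z z / 2 * ?e k - z k * trilinear h c (unit_coord k) ?e ?zb)"
    by (intro sum.cong refl) (auto simp: cconj_entry omega_entry domega_entry trilinear_cnj)
  have "sympl h ?w (cconj ?d) = trilinear h c ?e ?zb ?zb / 2 + trilinear h c ?e z z / 2 - trilinear h c z ?e ?zb"
    unfolding sympl_split s using l
    by (simp add: cconj_entry omega_entry domega_entry sum_subtractf trilinear_expand_first sum_unit_coord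
        trilinear_cnj sum_divide_distrib[symmetric])
  also have "\<dots> = - 2 * trilinear h c (complexify (unit_coord l)) (complexify (im_vec z)) (complexify (im_vec z))"
    unfolding unit_coord_complexify
    by (rule split_real_imaginary[where P = "\<lambda>z zb Y. trilinear h c (complexify (unit_coord l)) zb zb / 2
      + trilinear h c (complexify (unit_coord l)) z z / 2 - trilinear h c z (complexify (unit_coord l)) zb
      = - 2 * trilinear h c (complexify (unit_coord l)) (complexify Y) (complexify Y)"], rule polarisation_identities(3))
  finally show ?thesis by (simp add: trilinear_complexify)
qed

lemma pairing_domega_domega:
  assumes j: "j \<in> {1..h}" and l: "l \<in> {1..h}"
  shows "sympl h (domega h c j z) (cconj (domega h c l z))
    = 2 * \<i> * complex_of_real (trilinear h c (unit_coord j) (unit_coord l) (im_vec z))"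
proof -
  let ?d = "domega h c j z" and ?d' = "domega h c l z" and ?zb = "\<lambda>p. cnj (z p)"
  have s: "(\<Sum>k=1..h. ?d $ k * cconj ?d' $ (h+1+k) - ?d $ (h+1+k) * cconj ?d' $ k)
     = (\<Sum>k=1..h. trilinear h c (unit_coord k) (unit_coord j) z * unit_coord l k
         - unit_coord j k * trilinear h c (unit_coord k) (unit_coord l) ?zb)"
    by (intro sum.cong refl) (auto simp: cconj_entry domega_entry trilinear_cnj)
  have "sympl h ?d (cconj ?d') = trilinear h c (unit_coord l) (unit_coord j) z
      - trilinear h c (unit_coord j) (unit_coord l) ?zb"
    unfolding sympl_split s using j l
    by (simp add: cconj_entry domega_entry sum_subtractf sum_unit_coord)
  also have "\<dots> = 2 * \<i> * trilinear h c (complexify (unit_coord j)) (complexify (unit_coord l)) (complexify (im_vec z))"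
    unfolding unit_coord_complexify
    by (rule split_real_imaginary[where P = "\<lambda>z zb Y. trilinear h c (complexify (unit_coord l)) (complexify (unit_coord j)) z
      - trilinear h c (complexify (unit_coord j)) (complexify (unit_coord l)) zb
      = 2 * \<i> * trilinear h c (complexify (unit_coord j)) (complexify (unit_coord l)) (complexify Y)"],
      rule polarisation_identities(4))
  finally show ?thesis by (simp add: trilinear_complexify)
qed


section \<open>The Hermitian form on F^2 and on V^{2,1}\<close>

lemma sympl_linear_left:
  assumes "finite J"
  shows "sympl h (vec (2*h+2) (\<lambda>k. \<Sum>j\<in>J. a j * V j $ k)) w = (\<Sum>j\<in>J. a j * sympl h (V j) w)"
proof -
  have "sympl h (vec (2*h+2) (\<lambda>k. \<Sum>j\<in>J. a j * V j $ k)) w =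
     (\<Sum>k=0..h. \<Sum>j\<in>J. a j * (V j $ k * w $ (h+1+k) - V j $ (h+1+k) * w $ k))"
    unfolding sympl_def
    by (intro sum.cong refl) (auto simp: right_diff_distrib sum_subtractf sum_distrib_right mult.assoc)
  also have "\<dots> = (\<Sum>j\<in>J. a j * sympl h (V j) w)"
    unfolding sympl_def by (subst sum.swap) (simp add: sum_distrib_left)
  finally show ?thesis .
qed

lemma sympl_conj_linear_right:
  assumes "finite J" and dims: "\<And>j. j \<in> J \<Longrightarrow> dim_vec (V j) = 2*h+2"
  shows "sympl h v (cconj (vec (2*h+2) (\<lambda>k. \<Sum>j\<in>J. b j * V j $ k)))
    = (\<Sum>j\<in>J. cnj (b j) * sympl h v (cconj (V j)))"
proof -
  have "sympl h v (cconj (vec (2*h+2) (\<lambda>k. \<Sum>j\<in>J. b j * V j $ k))) =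
     (\<Sum>k=0..h. \<Sum>j\<in>J. cnj (b j) * (v $ k * cconj (V j) $ (h+1+k) - v $ (h+1+k) * cconj (V j) $ k))"
    unfolding sympl_def using dims
    by (intro sum.cong refl)
      (auto simp: cconj_entry cnj_sum sum_distrib_left sum_subtractf[symmetric] algebra_simps)
  also have "\<dots> = (\<Sum>j\<in>J. cnj (b j) * sympl h v (cconj (V j)))"
    unfolding sympl_def by (subst sum.swap) (simp add: sum_distrib_left)
  finally show ?thesis .
qed

definition F2_gen :: "nat \<Rightarrow> (nat \<Rightarrow> nat \<Rightarrow> nat \<Rightarrow> real) \<Rightarrow> (nat \<Rightarrow> complex) \<Rightarrow> nat \<Rightarrow> complex vec" where
  "F2_gen h c z j = (if j = 0 then omega h c z else domega h c j z)"

definition F2_vec :: "nat \<Rightarrow> (nat \<Rightarrow> nat \<Rightarrow> nat \<Rightarrow> real) \<Rightarrow> (nat \<Rightarrow> complex) \<Rightarrow> (nat \<Rightarrow> complex) \<Rightarrow> complex vec" where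
  "F2_vec h c z a = vec (2*h+2) (\<lambda>k. a 0 * omega h c z $ k + (\<Sum>i=1..h. a i * domega h c i z $ k))"

lemma F2_eq_range: "F2 h c z = range (F2_vec h c z)"
  unfolding F2_def F2_vec_def by auto

lemma F2_vec_gen: "F2_vec h c z a = vec (2*h+2) (\<lambda>k. \<Sum>j=0..h. a j * F2_gen h c z j $ k)"
  unfolding F2_vec_def F2_gen_def
  by (intro eq_vecI) (auto simp: sum.atLeast_Suc_atMost intro!: sum.cong)

(* The data of \<phi> at y = Im z entering the Gram matrix: T(y,y,y) = 6\<phi>(y),
   T(e_j,y,y) = 2 d\<phi>/dz_j(y) and T(e_j,e_l,y) = d^2\<phi>/dz_j dz_l(y). *)
definition cub_y :: "nat \<Rightarrow> (nat \<Rightarrow> nat \<Rightarrow> nat \<Rightarrow> real) \<Rightarrow> (nat \<Rightarrow> complex) \<Rightarrow> real" where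
  "cub_y h c z = trilinear h c (im_vec z) (im_vec z) (im_vec z)"

definition grad_y :: "nat \<Rightarrow> (nat \<Rightarrow> nat \<Rightarrow> nat \<Rightarrow> real) \<Rightarrow> (nat \<Rightarrow> complex) \<Rightarrow> nat \<Rightarrow> real" where
  "grad_y h c z j = trilinear h c (unit_coord j) (im_vec z) (im_vec z)"

definition hess_y :: "nat \<Rightarrow> (nat \<Rightarrow> nat \<Rightarrow> nat \<Rightarrow> real) \<Rightarrow> (nat \<Rightarrow> complex) \<Rightarrow> nat \<Rightarrow> nat \<Rightarrow> real" where
  "hess_y h c z j l = trilinear h c (unit_coord j) (unit_coord l) (im_vec z)"

definition lin_term :: "nat \<Rightarrow> (nat \<Rightarrow> nat \<Rightarrow> nat \<Rightarrow> real) \<Rightarrow> (nat \<Rightarrow> complex) \<Rightarrow> (nat \<Rightarrow> complex) \<Rightarrow> complex" where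
  "lin_term h c z a = (\<Sum>j=1..h. a j * complex_of_real (grad_y h c z j))"

definition herm_term :: "nat \<Rightarrow> (nat \<Rightarrow> nat \<Rightarrow> nat \<Rightarrow> real) \<Rightarrow> (nat \<Rightarrow> complex) \<Rightarrow> (nat \<Rightarrow> complex) \<Rightarrow> complex" where
  "herm_term h c z a = (\<Sum>j=1..h. \<Sum>l=1..h. a j * cnj (a l) * complex_of_real (hess_y h c z j l))"

lemma pairing_F2_omega:
  "sympl h (F2_vec h c z a) (cconj (omega h c z))
     = a 0 * \<i> * (4/3) * complex_of_real (cub_y h c z) + 2 * lin_term h c z a"
proof -
  have "sympl h (F2_vec h c z a) (cconj (omega h c z))
      = (\<Sum>j=0..h. a j * sympl h (F2_gen h c z j) (cconj (omega h c z)))"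
    unfolding F2_vec_gen by (rule sympl_linear_left) simp
  also have "\<dots> = a 0 * sympl h (omega h c z) (cconj (omega h c z))
      + (\<Sum>j=1..h. a j * sympl h (domega h c j z) (cconj (omega h c z)))"
    by (simp add: sum.atLeast_Suc_atMost F2_gen_def)
  also have "(\<Sum>j=1..h. a j * sympl h (domega h c j z) (cconj (omega h c z))) = 2 * lin_term h c z a"
    unfolding lin_term_def sum_distrib_left
    by (intro sum.cong refl) (simp add: pairing_domega_omega grad_y_def)
  finally show ?thesis by (simp add: pairing_omega_omega cub_y_def mult_ac)
qed

lemma pairing_F2_F2:
  "sympl h (F2_vec h c z a) (cconj (F2_vec h c z a))
     = a 0 * cnj (a 0) * \<i> * (4/3) * complex_of_real (cub_y h c z)
       - 2 * a 0 * cnj (lin_term h c z a) + 2 * cnj (a 0) * lin_term h c z a + 2 * \<i> * herm_term h c z a"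
proof -
  let ?G = "\<lambda>j l. sympl h (F2_gen h c z j) (cconj (F2_gen h c z l))"
  have "sympl h (F2_vec h c z a) (cconj (F2_vec h c z a))
      = (\<Sum>j=0..h. a j * sympl h (F2_gen h c z j) (cconj (F2_vec h c z a)))"
    unfolding F2_vec_gen[of h c z a] by (rule sympl_linear_left) simp
  also have "\<dots> = (\<Sum>j=0..h. a j * (\<Sum>l=0..h. cnj (a l) * ?G j l))"
    unfolding F2_vec_gen by (subst sympl_conj_linear_right) (auto simp: F2_gen_def)
  also have "\<dots> = a 0 * (cnj (a 0) * ?G 0 0 + (\<Sum>l=1..h. cnj (a l) * ?G 0 l))
      + (\<Sum>j=1..h. a j * (cnj (a 0) * ?G j 0 + (\<Sum>l=1..h. cnj (a l) * ?G j l)))"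
    by (simp add: sum.atLeast_Suc_atMost)
  also have "(\<Sum>l=1..h. cnj (a l) * ?G 0 l) = - 2 * cnj (lin_term h c z a)"
    unfolding lin_term_def cnj_sum sum_distrib_left
    by (intro sum.cong refl) (simp add: F2_gen_def pairing_omega_domega grad_y_def)
  also have "(\<Sum>j=1..h. a j * (cnj (a 0) * ?G j 0 + (\<Sum>l=1..h. cnj (a l) * ?G j l)))
     = 2 * cnj (a 0) * lin_term h c z a + 2 * \<i> * herm_term h c z a"
    unfolding lin_term_def herm_term_def sum_distrib_left distrib_left sum.distrib
    by (intro arg_cong2[where f="(+)"] sum.cong refl)
       (auto simp: F2_gen_def pairing_domega_omega pairing_domega_domega grad_y_def hess_y_def
         sum_distrib_left mult_ac)
  finally show ?thesis by (simp add: F2_gen_def pairing_omega_omega cub_y_def algebra_simps)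
qed

(* The f_0- and f_k-coordinates of an element of F^2 recover its coefficients, so the spanning
   vectors are linearly independent. *)
lemma F2_vec_eq_0_iff: "F2_vec h c z a = 0\<^sub>v (2*h+2) \<longleftrightarrow> (\<forall>j\<le>h. a j = 0)"
proof
  assume zero: "F2_vec h c z a = 0\<^sub>v (2*h+2)"
  have a0: "a 0 = 0" using arg_cong[OF zero, of "\<lambda>v. v $ (h+1)"]
    unfolding F2_vec_def by (simp add: omega_entry domega_entry)
  have "a k = 0" if k: "k \<in> {1..h}" for k
  proof -
    have "F2_vec h c z a $ (h+1+k) = a 0 * z k + (\<Sum>i=1..h. a i * unit_coord i k)"
      unfolding F2_vec_def using k by (simp add: omega_entry domega_entry)
    also have "(\<Sum>i=1..h. a i * (unit_coord i k :: complex)) = a k"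
      unfolding unit_coord_def using k by (simp add: if_distrib[where f="\<lambda>x. _ * x"] cong: if_cong)
    finally show "a k = 0" using zero k a0 by simp
  qed
  thus "\<forall>j\<le>h. a j = 0" using a0 by (metis atLeastAtMost_iff le_0_eq not_less_eq_eq One_nat_def)
next
  assume "\<forall>j\<le>h. a j = 0"
  thus "F2_vec h c z a = 0\<^sub>v (2*h+2)" unfolding F2_vec_def by (intro eq_vecI) auto
qed

lemma first_HR_iff: "0 < \<i> * sympl h (omega h c z) (cconj (omega h c z)) \<longleftrightarrow> cub_y h c z < 0"
  by (simp add: pairing_omega_omega cub_y_def less_complex_def)

lemma hess_y_sym: "hess_y h c z j l = hess_y h c z l j"
  unfolding hess_y_def by (rule trilinear_swap12)

lemma herm_term_real: "cnj (herm_term h c z a) = herm_term h c z a"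
proof -
  have "cnj (herm_term h c z a) = (\<Sum>j=1..h. \<Sum>l=1..h. cnj (a j) * a l * complex_of_real (hess_y h c z j l))"
    unfolding herm_term_def by (simp add: cnj_sum)
  also have "\<dots> = (\<Sum>l=1..h. \<Sum>j=1..h. cnj (a j) * a l * complex_of_real (hess_y h c z j l))"
    by (rule sum.swap)
  also have "\<dots> = herm_term h c z a" unfolding herm_term_def
    by (intro sum.cong refl) (subst hess_y_sym, simp add: mult_ac)
  finally show ?thesis .
qed

(* On V^{2,1} the constraint <\<psi>, conj \<omega>> = 0 fixes a_0 in terms of the linear term, and the
   Hermitian form becomes  3 |\<beta>|^2 / p - 2 Q. *)
lemma pairing_under_constraint:
  fixes a0 b Q :: complex and p :: real
  assumes p: "p \<noteq> 0" and con: "a0 * \<i> * (4/3) * complex_of_real p + 2 * b = 0"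
  shows "\<i> * (a0 * cnj a0 * \<i> * (4/3) * complex_of_real p - 2 * a0 * cnj b + 2 * cnj a0 * b + 2 * \<i> * Q)
    = 3 * b * cnj b / complex_of_real p - 2 * Q"
proof -
  have b: "b = - (2/3) * \<i> * complex_of_real p * a0" using con by (simp add: field_simps add_eq_0_iff)
  hence cb: "cnj b = (2/3) * \<i> * complex_of_real p * cnj a0" by simp
  have "3 * b * cnj b / complex_of_real p = 4/3 * complex_of_real p * a0 * cnj a0"
    unfolding cb using p by (subst b) (simp add: field_simps)
  thus ?thesis unfolding cb by (subst b) (simp add: algebra_simps)
qed

definition hess_form :: "nat \<Rightarrow> (nat \<Rightarrow> nat \<Rightarrow> nat \<Rightarrow> real) \<Rightarrow> (nat \<Rightarrow> complex) \<Rightarrow> (nat \<Rightarrow> real) \<Rightarrow> real" where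
  "hess_form h c z x = (\<Sum>j=1..h. \<Sum>l=1..h. x j * x l * hess_y h c z j l)"

definition grad_form :: "nat \<Rightarrow> (nat \<Rightarrow> nat \<Rightarrow> nat \<Rightarrow> real) \<Rightarrow> (nat \<Rightarrow> complex) \<Rightarrow> (nat \<Rightarrow> real) \<Rightarrow> real" where
  "grad_form h c z x = (\<Sum>j=1..h. x j * grad_y h c z j)"

definition reduced_form :: "nat \<Rightarrow> (nat \<Rightarrow> nat \<Rightarrow> nat \<Rightarrow> real) \<Rightarrow> (nat \<Rightarrow> complex) \<Rightarrow> (nat \<Rightarrow> real) \<Rightarrow> real" where
  "reduced_form h c z x = hess_form h c z x - 3/2 * (grad_form h c z x)^2 / cub_y h c z"

lemma reduced_form_cong:
  "(\<And>j. j \<in> {1..h} \<Longrightarrow> x j = x' j) \<Longrightarrow> reduced_form h c z x = reduced_form h c z x'"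
  unfolding reduced_form_def hess_form_def grad_form_def
  by (intro arg_cong2[where f="(-)"] arg_cong2[where f="(*)"] arg_cong2[where f="(/)"]
      arg_cong[where f="\<lambda>t. t^2"] sum.cong refl) auto

lemma reduced_form_zero: "(\<And>j. j \<in> {1..h} \<Longrightarrow> x j = 0) \<Longrightarrow> reduced_form h c z x = 0"
  by (subst reduced_form_cong[of h x "\<lambda>_. 0"]) (auto simp: reduced_form_def hess_form_def grad_form_def)

lemma norm_lin_term:
  "(cmod (lin_term h c z a))^2 = (grad_form h c z (\<lambda>j. Re (a j)))^2 + (grad_form h c z (\<lambda>j. Im (a j)))^2"
  unfolding cmod_power2 lin_term_def grad_form_def by (simp add: Re_sum Im_sum)

lemma Re_herm_term:
  "Re (herm_term h c z a) = hess_form h c z (\<lambda>j. Re (a j)) + hess_form h c z (\<lambda>j. Im (a j))"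
  unfolding herm_term_def hess_form_def by (simp add: Re_sum sum.distrib[symmetric] algebra_simps)

lemma pairing_V21_reduced:
  assumes p: "cub_y h c z \<noteq> 0" and con: "sympl h (F2_vec h c z a) (cconj (omega h c z)) = 0"
  shows "\<i> * sympl h (F2_vec h c z a) (cconj (F2_vec h c z a)) =
     complex_of_real (- 2 * (reduced_form h c z (\<lambda>j. Re (a j)) + reduced_form h c z (\<lambda>j. Im (a j))))"
proof -
  let ?b = "lin_term h c z a" and ?Q = "herm_term h c z a" and ?p = "cub_y h c z"
  have e: "\<i> * sympl h (F2_vec h c z a) (cconj (F2_vec h c z a)) = 3 * ?b * cnj ?b / complex_of_real ?p - 2 * ?Q"
    unfolding pairing_F2_F2 using con unfolding pairing_F2_omega by (rule pairing_under_constraint[OF p])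
  have bb: "?b * cnj ?b = complex_of_real ((cmod ?b)^2)"
    by (simp add: complex_norm_square del: of_real_power)
  obtain q where q: "?Q = complex_of_real q"
    using herm_term_real[of h c z a] by (metis Reals_cnj_iff Reals_cases)
  have "\<i> * sympl h (F2_vec h c z a) (cconj (F2_vec h c z a)) = complex_of_real (3 * (cmod ?b)^2 / ?p - 2 * Re ?Q)"
    unfolding e mult.assoc bb unfolding q by simp
  also have "3 * (cmod ?b)^2 / ?p - 2 * Re ?Q
      = - 2 * (reduced_form h c z (\<lambda>j. Re (a j)) + reduced_form h c z (\<lambda>j. Im (a j)))"
    unfolding norm_lin_term Re_herm_term reduced_form_def by (simp add: field_simps add_divide_distrib)
  finally show ?thesis .
qed

(* Negativity on V^{2,1} gives positivity of R: a real x \<noteq> 0 extends, by the unique a_0 solving the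
   constraint, to an element of V^{2,1} whose Hermitian norm is -2 R(x). *)
lemma second_HR_imp_reduced_form_pos:
  assumes p: "cub_y h c z \<noteq> 0"
    and HR2: "\<forall>\<psi>\<in>V21 h c z. \<psi> \<noteq> 0\<^sub>v (2*h+2) \<longrightarrow> \<i> * sympl h \<psi> (cconj \<psi>) < 0"
    and x: "\<exists>j\<in>{1..h}. x j \<noteq> 0"
  shows "reduced_form h c z x > 0"
proof -
  define a1 where "a1 = (\<lambda>j. complex_of_real (x j))"
  define a where "a = a1(0 := 3/2 * \<i> * lin_term h c z a1 / complex_of_real (cub_y h c z))"
  have "lin_term h c z a = lin_term h c z a1" unfolding lin_term_def by (intro sum.cong) (auto simp: a_def)
  hence con: "sympl h (F2_vec h c z a) (cconj (omega h c z)) = 0"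
    unfolding pairing_F2_omega using p by (simp add: a_def field_simps)
  obtain j where j: "j \<in> {1..h}" "x j \<noteq> 0" using x by auto
  hence "a j \<noteq> 0" by (simp add: a_def a1_def)
  hence "F2_vec h c z a \<noteq> 0\<^sub>v (2*h+2)" unfolding F2_vec_eq_0_iff using j(1) by auto
  moreover have "F2_vec h c z a \<in> V21 h c z" unfolding V21_def F2_eq_range using con by auto
  ultimately have "\<i> * sympl h (F2_vec h c z a) (cconj (F2_vec h c z a)) < 0" using HR2 by blast
  hence "reduced_form h c z (\<lambda>j. Re (a j)) + reduced_form h c z (\<lambda>j. Im (a j)) > 0"
    unfolding pairing_V21_reduced[OF p con] by (simp add: less_complex_def)
  moreover have "reduced_form h c z (\<lambda>j. Re (a j)) = reduced_form h c z x"
    by (rule reduced_form_cong) (auto simp: a_def a1_def)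
  moreover have "reduced_form h c z (\<lambda>j. Im (a j)) = 0"
    by (rule reduced_form_zero) (auto simp: a_def a1_def)
  ultimately show ?thesis by simp
qed

(* Conversely, positivity of R gives negativity on V^{2,1}: the constraint forces a_0 = 0 when
   a_1 = ... = a_h = 0, so a nonzero \<psi> has a nonzero real or imaginary part (a_1, ..., a_h). *)
lemma reduced_form_pos_imp_second_HR:
  assumes p: "cub_y h c z \<noteq> 0"
    and R: "\<forall>x. (\<exists>j\<in>{1..h}. x j \<noteq> 0) \<longrightarrow> reduced_form h c z x > 0"
    and \<psi>: "\<psi> \<in> V21 h c z" "\<psi> \<noteq> 0\<^sub>v (2*h+2)"
  shows "\<i> * sympl h \<psi> (cconj \<psi>) < 0"
proof -
  have R_nonneg: "reduced_form h c z x \<ge> 0" for x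
    using R reduced_form_zero[of h x] by (cases "\<exists>j\<in>{1..h}. x j \<noteq> 0") (auto intro: less_imp_le)
  obtain a where \<psi>_eq: "\<psi> = F2_vec h c z a" and con: "sympl h (F2_vec h c z a) (cconj (omega h c z)) = 0"
    using \<psi>(1) unfolding V21_def F2_eq_range by auto
  have "\<exists>j\<in>{1..h}. a j \<noteq> 0"
  proof (rule ccontr)
    assume "\<not> ?thesis"
    hence a: "\<And>j. j \<in> {1..h} \<Longrightarrow> a j = 0" by auto
    hence "lin_term h c z a = 0" unfolding lin_term_def by simp
    hence "a 0 = 0" using con p unfolding pairing_F2_omega by simp
    hence "\<forall>j\<le>h. a j = 0" using a by (metis atLeastAtMost_iff le_0_eq not_less_eq_eq One_nat_def)
    thus False using \<psi> \<psi>_eq F2_vec_eq_0_iff by blast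
  qed
  then obtain j where j: "j \<in> {1..h}" "a j \<noteq> 0" by blast
  hence "Re (a j) \<noteq> 0 \<or> Im (a j) \<noteq> 0" by (simp add: complex_eq_iff)
  hence "reduced_form h c z (\<lambda>j. Re (a j)) > 0 \<or> reduced_form h c z (\<lambda>j. Im (a j)) > 0"
    using R[rule_format, of "\<lambda>j. Re (a j)"] R[rule_format, of "\<lambda>j. Im (a j)"] j(1) by blast
  hence "reduced_form h c z (\<lambda>j. Re (a j)) + reduced_form h c z (\<lambda>j. Im (a j)) > 0"
    using R_nonneg[of "\<lambda>j. Re (a j)"] R_nonneg[of "\<lambda>j. Im (a j)"] by linarith
  thus ?thesis unfolding \<psi>_eq pairing_V21_reduced[OF p con] by (simp add: less_complex_def)
qed

lemma HR_iff_reduced_form_pos: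
  "HR_holds h c z \<longleftrightarrow> cub_y h c z < 0 \<and> (\<forall>x. (\<exists>j\<in>{1..h}. x j \<noteq> 0) \<longrightarrow> reduced_form h c z x > 0)"
proof (cases "cub_y h c z < 0")
  case True
  hence p: "cub_y h c z \<noteq> 0" by simp
  show ?thesis unfolding HR_holds_def first_HR_iff
    using True second_HR_imp_reduced_form_pos[OF p] reduced_form_pos_imp_second_HR[OF p] by blast
qed (simp add: HR_holds_def first_HR_iff)


section \<open>From the reduced form to the Hessian matrix\<close>

definition coord_vec :: "nat \<Rightarrow> (nat \<Rightarrow> real) \<Rightarrow> real vec" where
  "coord_vec h x = vec h (\<lambda>i. x (Suc i))"

lemma coord_vec_carrier: "coord_vec h x \<in> carrier_vec h"
  by (simp add: coord_vec_def)

lemma coord_vec_eq_0_iff: "coord_vec h x = 0\<^sub>v h \<longleftrightarrow> (\<forall>j\<in>{1..h}. x j = 0)"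
proof
  assume "coord_vec h x = 0\<^sub>v h"
  hence "\<And>i. i < h \<Longrightarrow> x (Suc i) = 0"
    unfolding coord_vec_def by (metis index_vec index_zero_vec(1))
  show "\<forall>j\<in>{1..h}. x j = 0"
  proof
    fix j assume j: "j \<in> {1..h}"
    hence "j = Suc (j - 1)" "j - 1 < h" by auto
    thus "x j = 0" using \<open>\<And>i. i < h \<Longrightarrow> x (Suc i) = 0\<close> by metis
  qed
qed (auto simp: coord_vec_def intro!: eq_vecI)

lemma coord_vec_surj: "v \<in> carrier_vec h \<Longrightarrow> coord_vec h (\<lambda>j. v $ (j - 1)) = v"
  unfolding coord_vec_def by (intro eq_vecI) auto

lemma hessian_hess_y:
  "i < h \<Longrightarrow> j < h \<Longrightarrow> hessian h c (im_vec z) $$ (i,j) = hess_y h c z (Suc i) (Suc j)"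
  by (simp add: hessian_entry hess_y_def)

lemma hessian_carrier: "hessian h c y \<in> carrier_mat h h"
  unfolding hessian_def by simp

lemma hessian_symmetric: "transpose_mat (hessian h c (im_vec z)) = hessian h c (im_vec z)"
  using hessian_carrier[of h c "im_vec z"]
  by (intro eq_matI) (auto simp: hessian_hess_y hess_y_sym[of h c z])

lemma hessian_bilinear:
  "coord_vec h x \<bullet> (hessian h c (im_vec z) *\<^sub>v coord_vec h w)
     = (\<Sum>i=1..h. \<Sum>j=1..h. x i * hess_y h c z i j * w j)"
proof -
  have shift: "(\<Sum>i=1..h. f i) = (\<Sum>i<h. f (Suc i))" for f :: "nat \<Rightarrow> real"
  proof -
    have e: "{1..h} = {Suc 0..<Suc h}" by auto
    show ?thesis unfolding e sum.shift_bounds_Suc_ivl atLeast0LessThan ..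
  qed
  have "coord_vec h x \<bullet> (hessian h c (im_vec z) *\<^sub>v coord_vec h w)
      = (\<Sum>i<h. x (Suc i) * (\<Sum>j<h. hess_y h c z (Suc i) (Suc j) * w (Suc j)))"
    using hessian_carrier[of h c "im_vec z"]
    by (simp add: coord_vec_def scalar_prod_def atLeast0LessThan hessian_hess_y)
  thus ?thesis unfolding shift by (simp add: sum_distrib_left mult_ac)
qed

(* Euler's identities for the homogeneous cubic at y: the gradient is H y and 6\<phi>(y) = y^T H y. *)
lemma grad_y_hess_y: "j \<in> {1..h} \<Longrightarrow> grad_y h c z j = (\<Sum>l=1..h. hess_y h c z j l * im_vec z l)"
proof -
  assume j: "j \<in> {1..h}"
  have "(\<Sum>l=1..h. hess_y h c z j l * im_vec z l)
      = (\<Sum>l=Suc 0..h. im_vec z l * trilinear h c (unit_coord l) (unit_coord j) (im_vec z))"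
    unfolding hess_y_def
  proof (intro sum.cong refl)
    fix l
    have "trilinear h c (unit_coord j) (unit_coord l) (im_vec z)
        = trilinear h c (unit_coord l) (unit_coord j) (im_vec z)" by (rule trilinear_swap12)
    thus "trilinear h c (unit_coord j) (unit_coord l) (im_vec z) * im_vec z l
        = im_vec z l * trilinear h c (unit_coord l) (unit_coord j) (im_vec z)" by simp
  qed simp
  also have "\<dots> = trilinear h c (im_vec z) (unit_coord j) (im_vec z)" by (rule trilinear_expand_first)
  finally show ?thesis unfolding grad_y_def by (simp add: trilinear_swap12)
qed


lemma reduced_form_as_matrix:
  fixes h :: nat and c :: "nat \<Rightarrow> nat \<Rightarrow> nat \<Rightarrow> real" and z :: "nat \<Rightarrow> complex"
  defines "H \<equiv> hessian h c (im_vec z)" and "y \<equiv> coord_vec h (im_vec z)"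
  shows "cub_y h c z = y \<bullet> (H *\<^sub>v y)"
    and "reduced_form h c z x = coord_vec h x \<bullet> (H *\<^sub>v coord_vec h x)
          - 3/2 * (coord_vec h x \<bullet> (H *\<^sub>v y))^2 / (y \<bullet> (H *\<^sub>v y))"
proof -
  have grad: "grad_form h c z x = coord_vec h x \<bullet> (H *\<^sub>v y)" for x
    unfolding grad_form_def H_def y_def hessian_bilinear
  proof (intro sum.cong refl)
    fix j assume "j \<in> {1..h}"
    thus "x j * grad_y h c z j = (\<Sum>l=1..h. x j * hess_y h c z j l * im_vec z l)"
      by (simp add: grad_y_hess_y sum_distrib_left mult.assoc)
  qed
  have "cub_y h c z = grad_form h c z (im_vec z)"
    unfolding cub_y_def grad_form_def grad_y_def by (simp add: trilinear_expand_first)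
  thus cub: "cub_y h c z = y \<bullet> (H *\<^sub>v y)" unfolding grad y_def .
  have "hess_form h c z x = coord_vec h x \<bullet> (H *\<^sub>v coord_vec h x)"
    unfolding hess_form_def H_def hessian_bilinear by (intro sum.cong refl) (simp add: mult_ac)
  thus "reduced_form h c z x = coord_vec h x \<bullet> (H *\<^sub>v coord_vec h x)
      - 3/2 * (coord_vec h x \<bullet> (H *\<^sub>v y))^2 / (y \<bullet> (H *\<^sub>v y))"
    unfolding reduced_form_def cub grad by simp
qed

lemma reduced_form_pos_iff_vec:
  "(\<forall>x. (\<exists>j\<in>{1..h}. x j \<noteq> 0) \<longrightarrow> reduced_form h c z x > 0) \<longleftrightarrow>
   (\<forall>v\<in>carrier_vec h. v \<noteq> 0\<^sub>v h \<longrightarrow>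
      v \<bullet> (hessian h c (im_vec z) *\<^sub>v v) - 3/2 * (v \<bullet> (hessian h c (im_vec z) *\<^sub>v coord_vec h (im_vec z)))^2
        / (coord_vec h (im_vec z) \<bullet> (hessian h c (im_vec z) *\<^sub>v coord_vec h (im_vec z))) > 0)"
  (is "?L \<longleftrightarrow> ?V")
proof
  assume L: ?L
  show ?V
  proof (intro ballI impI)
    fix v :: "real vec" assume v: "v \<in> carrier_vec h" "v \<noteq> 0\<^sub>v h"
    have eq: "coord_vec h (\<lambda>j. v $ (j - 1)) = v" by (rule coord_vec_surj[OF v(1)])
    hence "\<exists>j\<in>{1..h}. v $ (j - 1) \<noteq> 0" using v(2) coord_vec_eq_0_iff[of h "\<lambda>j. v $ (j - 1)"] by auto
    hence "reduced_form h c z (\<lambda>j. v $ (j - 1)) > 0" by (rule L[rule_format])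
    thus "v \<bullet> (hessian h c (im_vec z) *\<^sub>v v) - 3/2 * (v \<bullet> (hessian h c (im_vec z) *\<^sub>v coord_vec h (im_vec z)))^2
        / (coord_vec h (im_vec z) \<bullet> (hessian h c (im_vec z) *\<^sub>v coord_vec h (im_vec z))) > 0"
      unfolding reduced_form_as_matrix eq .
  qed
next
  assume V: ?V
  show ?L
  proof (intro allI impI)
    fix x :: "nat \<Rightarrow> real" assume "\<exists>j\<in>{1..h}. x j \<noteq> 0"
    hence "coord_vec h x \<noteq> 0\<^sub>v h" using coord_vec_eq_0_iff[of h x] by blast
    with V coord_vec_carrier[of h x] show "reduced_form h c z x > 0"
      unfolding reduced_form_as_matrix by simp
  qed
qed

lemma HR_holds_iff_signature:
  "HR_holds h c z \<longleftrightarrow>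
     cubic_form h c (im_vec z) < (0::real) \<and> has_signature (hessian h c (im_vec z)) (h - 1) 1"
proof -
  have cub: "cubic_form h c (im_vec z) < (0::real) \<longleftrightarrow> cub_y h c z < 0"
    unfolding cubic_form_trilinear cub_y_def by simp
  have "(\<forall>x. (\<exists>j\<in>{1..h}. x j \<noteq> 0) \<longrightarrow> reduced_form h c z x > 0)
      \<longleftrightarrow> has_signature (hessian h c (im_vec z)) (h - 1) 1" if "cub_y h c z < 0"
    unfolding reduced_form_pos_iff_vec
    by (rule corrected_form_pos_iff_signature[OF hessian_carrier hessian_symmetric coord_vec_carrier])
      (use that in \<open>simp_all add: reduced_form_as_matrix\<close>)
  thus ?thesis unfolding HR_iff_reduced_form_pos cub by blast
qed

theorem mainTheorem14:
  fixes h :: nat and c :: "nat \<Rightarrow> nat \<Rightarrow> nat \<Rightarrow> real"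
  shows "{z :: nat \<Rightarrow> complex. HR_holds h c z} =
         {z. cubic_form h c (\<lambda>i. Im (z i)) < (0::real) \<and>
             has_signature (hessian h c (\<lambda>i. Im (z i))) (h - 1) 1}"
  using HR_holds_iff_signature[of h c] unfolding im_vec_def by auto

end
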